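(* Let $r\ge1$, $\kappa\ge3m_2+1$, $T>0$, and let $U\in C^{r+1}([0,T];\mathcal X)$ be the exact solution of $U_t=\varepsilon^2\Delta U+f(U)$ (periodic boundary conditions) with $\|U(t)\|_{\mathcal X}\le\sqrt{m_2}$ for all $t\in[0,T]$. Use the uniform nodes $a_{j,k}=k/j$ in the scheme, let $\tau>0$, $t_n\ge0$ with $t_n+\tau\le T$, $s_k=k\tau/r$ ($k=0,\dots,r$), and let $U^n\in\mathcal X_{m_2}$. Then: (i) at every $\boldsymbol x$ where $\max_{s\in[0,\tau]}\|P_r^n(s,\boldsymbol x)\|_{\rm F}\le\kappa\sqrt{m_2}$ one has $\alpha_r^n(\boldsymbol x)=1$, i.e. $\widetilde P_r^n(\cdot,\boldsymbol x)=P_r^n(\cdot,\boldsymbol x)$; (ii) for every $s\in[0,\tau]$, $$\|P_r^n(s)-\widetilde P_r^n(s)\|_{\mathcal X}\le2\kappa r^r\sum_{k=0}^r\|W_r^n(s_k)-U(t_n+s_k)\|_{\mathcal X}+C_r\tau^{r+1},$$ where $W_r^n(0)=U^n$ and $C_r$ depends only on $\kappa$, $m_1$, $m_2$, $r$ and the $C^{r+1}([0,T];\mathcal X)$-norm of $U$, not on $\tau$ or $n$.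
   Context: Let $d\in\{1,2,3\}$ and let $\Omega\subset\mathbb{R}^d$ be a rectangular box, all functions on $\Omega$ being $\Omega$-periodic. Let $m_1\ge m_2\ge1$ be integers, $\varepsilon>0$, $\kappa>0$. $\|\cdot\|_{\rm F}$ is the Frobenius norm. For $U\in\mathbb{R}^{m_1\times m_2}$, $f(U)=U-UU^\top U$ and $\mathcal N[U]=\kappa U+f(U)$ (applied pointwise to functions). $\mathcal X$ is the Banach space of continuous $\Omega$-periodic functions $\overline\Omega\to\mathbb{R}^{m_1\times m_2}$ with norm $\|W\|_{\mathcal X}=\max_{\boldsymbol x}\|W(\boldsymbol x)\|_{\rm F}$, and $\mathcal X_{m_2}=\{W\in\mathcal X:\|W\|_{\mathcal X}\le\sqrt{m_2}\}$. $\mathcal L_\kappa=\varepsilon^2\Delta-\kappa\mathcal I$ with periodic boundary conditions, acting componentwise, and $e^{t\mathcal L_\kappa}=e^{-\kappa t}e^{t\varepsilon^2\Delta}$ with $e^{t\varepsilon^2\Delta}$ the periodic heat semigroup. Rescaled ETDRK scheme: for each $j\ge1$ fix nodes $0=a_{j,0}<a_{j,1}<\dots<a_{j,j}=1$. Given a time step $\tau>0$ and $U^n\in\mathcal X$, define for $s\in[0,\tau]$: $W_1^n(s)=e^{s\mathcal L_\kappa}U^n+\int_0^s e^{(s-\sigma)\mathcal L_\kappa}\mathcal N[U^n]\,\mathrm d\sigma$. Recursively for $j\ge1$: let $P_j^n(s,\boldsymbol x)$ be the unique polynomial in $s$ of degree $\le j$ with coefficients in $\mathbb{R}^{m_1\times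 m_2}$ (depending on $\boldsymbol x$) such that $P_j^n(0,\boldsymbol x)=\mathcal N[U^n(\boldsymbol x)]$ and $P_j^n(a_{j,k}\tau,\boldsymbol x)=\mathcal N[W_j^n(a_{j,k}\tau,\boldsymbol x)]$ for $k=1,\dots,j$; let $\alpha_j^n(\boldsymbol x)=\min\{\kappa\sqrt{m_2}/\max_{s\in[0,\tau]}\|P_j^n(s,\boldsymbol x)\|_{\rm F},\,1\}$ (taken to be $1$ if the maximum is $0$), $\widetilde P_j^n(s,\boldsymbol x)=\alpha_j^n(\boldsymbol x)P_j^n(s,\boldsymbol x)$, and $W_{j+1}^n(s)=e^{s\mathcal L_\kappa}U^n+\int_0^s e^{(s-\sigma)\mathcal L_\kappa}\widetilde P_j^n(\sigma)\,\mathrm d\sigma$. The rescaled ETDRK$r$ scheme is $U^0=U_0$, $U^{n+1}=W_r^n(\tau)$ for $n\ge0$. *)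

theory Defs
  imports "HOL-Analysis.Analysis"
begin

text \<open>Matrices in R^{m1 x m2} are rendered as real^'m2^'m1 (rows indexed by 'm1);
  the HOL-Analysis norm on this type is exactly the Frobenius norm.
  Points of R^d are real^'d.\<close>

definition fnl :: "real^'n^'m \<Rightarrow> real^'n^'m" where
  "fnl U = U - U ** transpose U ** U"

definition Nop :: "real \<Rightarrow> real^'n^'m \<Rightarrow> real^'n^'m" where
  "Nop \<kappa> U = \<kappa> *\<^sub>R U + fnl U"

definition periodic_box :: "real^'d \<Rightarrow> (real^'d \<Rightarrow> 'b) \<Rightarrow> bool" where
  "periodic_box L g \<longleftrightarrow> (\<forall>x i. g (x + axis i (L$i)) = g x)"

text \<open>Sup norm (the norm of the space X).\<close>
definition supnorm :: "(real^'d \<Rightarrow> real^'n^'m) \<Rightarrow> real" where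
  "supnorm g = (SUP x. norm (g x))"

text \<open>Heat semigroup e^{t eps^2 Delta}: convolution with the Gaussian heat kernel
  (applied to the periodic function on all of R^d), identity at t = 0.\<close>
definition heat_kernel :: "real \<Rightarrow> real \<Rightarrow> real^'d \<Rightarrow> real" where
  "heat_kernel \<epsilon> t y =
     (4 * pi * \<epsilon>\<^sup>2 * t) powr (- real CARD('d) / 2) * exp (- (norm y)\<^sup>2 / (4 * \<epsilon>\<^sup>2 * t))"

definition heat :: "real \<Rightarrow> real \<Rightarrow> (real^'d \<Rightarrow> real^'n^'m) \<Rightarrow> real^'d \<Rightarrow> real^'n^'m" where
  "heat \<epsilon> t g x = (if t = 0 then g x
      else integral UNIV (\<lambda>y. heat_kernel \<epsilon> t (x - y) *\<^sub>R g y))"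

text \<open>e^{t L_kappa} = e^{-kappa t} e^{t eps^2 Delta}.\<close>
definition semi :: "real \<Rightarrow> real \<Rightarrow> real \<Rightarrow> (real^'d \<Rightarrow> real^'n^'m) \<Rightarrow> real^'d \<Rightarrow> real^'n^'m" where
  "semi \<epsilon> \<kappa> t g x = exp (- \<kappa> * t) *\<^sub>R heat \<epsilon> t g x"

definition duhamel :: "real \<Rightarrow> real \<Rightarrow> (real^'d \<Rightarrow> real^'n^'m) \<Rightarrow> (real \<Rightarrow> real^'d \<Rightarrow> real^'n^'m)
    \<Rightarrow> real \<Rightarrow> real^'d \<Rightarrow> real^'n^'m" where
  "duhamel \<epsilon> \<kappa> U0 G s x = semi \<epsilon> \<kappa> s U0 x + integral {0..s} (\<lambda>\<sigma>. semi \<epsilon> \<kappa> (s - \<sigma>) (G \<sigma>) x)"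

text \<open>Lagrange basis polynomials for the nodes a j 0 * tau, ..., a j j * tau
  (with a j 0 = 0); the interpolation polynomial of degree <= j.\<close>
definition lagr :: "(nat \<Rightarrow> nat \<Rightarrow> real) \<Rightarrow> nat \<Rightarrow> real \<Rightarrow> nat \<Rightarrow> real \<Rightarrow> real" where
  "lagr a j \<tau> k s = (\<Prod>i\<in>{0..j} - {k}. (s - a j i * \<tau>) / (a j k * \<tau> - a j i * \<tau>))"

definition Pint :: "(nat \<Rightarrow> nat \<Rightarrow> real) \<Rightarrow> real \<Rightarrow> real \<Rightarrow> nat \<Rightarrow> (real^'d \<Rightarrow> real^'n^'m)
    \<Rightarrow> (real \<Rightarrow> real^'d \<Rightarrow> real^'n^'m) \<Rightarrow> real \<Rightarrow> real^'d \<Rightarrow> real^'n^'m" where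
  "Pint a \<kappa> \<tau> j Vn Wj s x =
     (\<Sum>k=0..j. lagr a j \<tau> k s *\<^sub>R
        (if k = 0 then Nop \<kappa> (Vn x) else Nop \<kappa> (Wj (a j k * \<tau>) x)))"

text \<open>Rescaling factor alpha_j^n(x) for a polynomial P(s,x), with m2 = CARD('n).\<close>
definition alpha :: "real \<Rightarrow> real \<Rightarrow> (real \<Rightarrow> real^'d \<Rightarrow> real^'n^'m) \<Rightarrow> real^'d \<Rightarrow> real" where
  "alpha \<kappa> \<tau> P x =
     (let M = (SUP s\<in>{0..\<tau>}. norm (P s x))
      in if M = 0 then 1 else min (\<kappa> * sqrt (real CARD('n)) / M) 1)"

text \<open>Wsch ... j represents W_{j+1}^n.\<close>
primrec Wsch :: "(nat \<Rightarrow> nat \<Rightarrow> real) \<Rightarrow> real \<Rightarrow> real \<Rightarrow> real \<Rightarrow> (real^'d \<Rightarrow> real^'n^'m)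
    \<Rightarrow> nat \<Rightarrow> real \<Rightarrow> real^'d \<Rightarrow> real^'n^'m" where
  "Wsch a \<epsilon> \<kappa> \<tau> Vn 0 = duhamel \<epsilon> \<kappa> Vn (\<lambda>\<sigma> x. Nop \<kappa> (Vn x))"
| "Wsch a \<epsilon> \<kappa> \<tau> Vn (Suc j) =
     (let P = Pint a \<kappa> \<tau> (Suc j) Vn (Wsch a \<epsilon> \<kappa> \<tau> Vn j)
      in duhamel \<epsilon> \<kappa> Vn (\<lambda>\<sigma> x. alpha \<kappa> \<tau> P x *\<^sub>R P \<sigma> x))"

definition Wn where "Wn a \<epsilon> \<kappa> \<tau> Vn j = Wsch a \<epsilon> \<kappa> \<tau> Vn (j - 1)"

definition Pn where "Pn a \<epsilon> \<kappa> \<tau> Vn j = Pint a \<kappa> \<tau> j Vn (Wn a \<epsilon> \<kappa> \<tau> Vn j)"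

definition alphan where "alphan a \<epsilon> \<kappa> \<tau> Vn j = alpha \<kappa> \<tau> (Pn a \<epsilon> \<kappa> \<tau> Vn j)"

definition Ptn where
  "Ptn a \<epsilon> \<kappa> \<tau> Vn j s x = alphan a \<epsilon> \<kappa> \<tau> Vn j x *\<^sub>R Pn a \<epsilon> \<kappa> \<tau> Vn j s x"

definition unif_nodes :: "nat \<Rightarrow> nat \<Rightarrow> real" where
  "unif_nodes j k = real k / real j"

definition pdiff :: "'d::finite \<Rightarrow> (real^'d \<Rightarrow> 'b::real_normed_vector) \<Rightarrow> real^'d \<Rightarrow> 'b" where
  "pdiff i g x = vector_derivative (\<lambda>h. g (x + h *\<^sub>R axis i 1)) (at 0)"

definition twice_partially_diff :: "(real^'d \<Rightarrow> 'b::real_normed_vector) \<Rightarrow> bool" where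
  "twice_partially_diff g \<longleftrightarrow> (\<forall>i x.
     (\<lambda>h. g (x + h *\<^sub>R axis i 1)) differentiable (at 0) \<and>
     (\<lambda>h. pdiff i g (x + h *\<^sub>R axis i 1)) differentiable (at 0))"

definition laplacian :: "(real^'d \<Rightarrow> 'b::real_normed_vector) \<Rightarrow> real^'d \<Rightarrow> 'b" where
  "laplacian g x = (\<Sum>i\<in>UNIV. pdiff i (pdiff i g) x)"

definition Ck_derivs :: "nat \<Rightarrow> real \<Rightarrow> (real \<Rightarrow> 'a::real_normed_vector) \<Rightarrow> (nat \<Rightarrow> real \<Rightarrow> 'a) \<Rightarrow> bool" where
  "Ck_derivs q T U Ds \<longleftrightarrow> (\<forall>t\<in>{0..T}. Ds 0 t = U t) \<and>
     (\<forall>k<q. \<forall>t\<in>{0..T}. (Ds k has_vector_derivative Ds (Suc k) t) (at t within {0..T})) \<and>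
     continuous_on {0..T} (Ds q)"

definition Ck_norm :: "nat \<Rightarrow> real \<Rightarrow> (nat \<Rightarrow> real \<Rightarrow> 'a::real_normed_vector) \<Rightarrow> real" where
  "Ck_norm q T Ds = Max ((\<lambda>k. SUP t\<in>{0..T}. norm (Ds k t)) ` {0..q})"

definition exact_solution :: "real \<Rightarrow> real^'d \<Rightarrow> real \<Rightarrow> (real \<Rightarrow> ((real^'d) \<Rightarrow>\<^sub>C (real^'n^'m))) \<Rightarrow> bool" where
  "exact_solution \<epsilon> L T U \<longleftrightarrow>
     (\<forall>t\<in>{0..T}. periodic_box L (apply_bcontfun (U t)) \<and> twice_partially_diff (apply_bcontfun (U t))) \<and>
     (\<forall>t\<in>{0..T}. \<forall>x. ((\<lambda>t'. apply_bcontfun (U t') x) has_vector_derivative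
         (\<epsilon>\<^sup>2 *\<^sub>R laplacian (apply_bcontfun (U t)) x + fnl (apply_bcontfun (U t) x))) (at t within {0..T}))"

end

theory Submission
  imports Defs "HOL-Probability.Probability" "HOL-Computational_Algebra.Polynomial"
begin

text \<open>Fix \<open>x\<close>. \<open>P\<^sub>r\<^sup>n(\<cdot>, x)\<close> is the Lagrange interpolant at the uniform nodes \<open>s\<^sub>k\<close> of
  the values \<open>N[W\<^sub>r\<^sup>n(s\<^sub>k, x)]\<close>, and rescaling moves it by at most
  \<open>max 0 (max\<^sub>s |P\<^sub>r\<^sup>n(s, x)| - \<kappa> sqrt m\<^sub>2)\<close>. Compare \<open>P\<^sub>r\<^sup>n\<close> with the interpolant \<open>Q\<close>
  of \<open>s \<mapsto> N[U(t\<^sub>n + s, x)]\<close>. Every stage \<open>W\<^sub>j\<^sup>n\<close> stays in the ball of radius \<open>sqrt m\<^sub>2\<close>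
  (the damped Duhamel formula is a convex combination of \<open>U\<^sup>n\<close> and of a source of size
  \<open>\<le> \<kappa> sqrt m\<^sub>2\<close>), on this ball \<open>N\<close> is \<open>2\<kappa>\<close>-Lipschitz, and the Lagrange basis at uniform
  nodes is bounded by \<open>r\<^sup>r\<close>; hence \<open>|P\<^sub>r\<^sup>n - Q| \<le> 2\<kappa> r\<^sup>r \<Sum>\<^sub>k |W\<^sub>r\<^sup>n(s\<^sub>k) - U(t\<^sub>n + s\<^sub>k)|\<close>.
  Since \<open>Q\<close> reproduces the degree-\<open>r\<close> Taylor polynomial of the \<open>C\<^sup>r\<^sup>+\<^sup>1\<close> curve
  \<open>s \<mapsto> N[U(t\<^sub>n + s)]\<close>, it is within \<open>O(\<tau>\<^sup>r\<^sup>+\<^sup>1)\<close> of it, and \<open>|N[U]| \<le> \<kappa> sqrt m\<^sub>2\<close>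
  because \<open>\<kappa> \<ge> 3m\<^sub>2 + 1\<close>.\<close>

section \<open>Frobenius norm of matrices\<close>

lemma norm_matrix_mult_le: "norm (A ** B) \<le> norm A * norm B"
  for A :: "real^'n^'m" and B :: "real^'k^'n"
proof -
  have "(\<Sum>k\<in>UNIV. (norm (column k B))\<^sup>2) = (\<Sum>k\<in>UNIV. \<Sum>j\<in>UNIV. (B$j$k)\<^sup>2)"
    by (simp add: norm_vec_def L2_set_def sum_nonneg column_def)
  also have "\<dots> = (norm B)\<^sup>2"
    by (subst sum.swap) (simp add: norm_vec_def L2_set_def sum_nonneg)
  finally have col: "(\<Sum>k\<in>UNIV. (norm (column k B))\<^sup>2) = (norm B)\<^sup>2" .
  have row: "(norm A)\<^sup>2 = (\<Sum>i\<in>UNIV. (norm (A$i))\<^sup>2)"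
    by (simp add: norm_vec_def L2_set_def sum_nonneg)
  have "(norm (A ** B))\<^sup>2 = (\<Sum>i\<in>UNIV. \<Sum>k\<in>UNIV. (A$i \<bullet> column k B)\<^sup>2)"
    by (simp add: norm_vec_def L2_set_def sum_nonneg matrix_matrix_mult_def inner_vec_def column_def)
  also have "\<dots> \<le> (\<Sum>i\<in>UNIV. \<Sum>k\<in>UNIV. (norm (A$i))\<^sup>2 * (norm (column k B))\<^sup>2)"
  proof (intro sum_mono)
    fix i k
    have "\<bar>A$i \<bullet> column k B\<bar> \<le> norm (A$i) * norm (column k B)"
      by (rule Cauchy_Schwarz_ineq2)
    then show "(A$i \<bullet> column k B)\<^sup>2 \<le> (norm (A$i))\<^sup>2 * (norm (column k B))\<^sup>2"
      by (metis abs_ge_zero power2_abs power_mono power_mult_distrib)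
  qed
  also have "\<dots> = (norm A * norm B)\<^sup>2"
    by (simp add: row col[symmetric] sum_product power_mult_distrib)
  finally show ?thesis
    by (simp add: power2_le_iff_abs_le)
qed

lemma norm_transpose: "norm (transpose A) = norm A"
  for A :: "real^'n^'m"
proof -
  have "(norm (transpose A))\<^sup>2 = (\<Sum>i\<in>UNIV. \<Sum>j\<in>UNIV. (A$j$i)\<^sup>2)"
    by (simp add: norm_vec_def L2_set_def sum_nonneg transpose_def)
  also have "\<dots> = (norm A)\<^sup>2"
    by (subst sum.swap) (simp add: norm_vec_def L2_set_def sum_nonneg)
  finally show ?thesis
    by (simp add: power2_eq_iff_nonneg)
qed

lemma norm_matrix_mult_transpose_mult_le: "norm (A ** transpose B ** C) \<le> norm A * norm B * norm C"
  for A :: "real^'n^'m" and B :: "real^'n^'k" and C :: "real^'l^'k"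
proof -
  have "norm (A ** transpose B) \<le> norm A * norm B"
    using norm_matrix_mult_le[of A "transpose B"] by (simp add: norm_transpose)
  then show ?thesis
    using norm_matrix_mult_le[of "A ** transpose B" C] by (meson mult_right_mono norm_ge_zero order_trans)
qed

lemma bounded_bilinear_matrix_mult: "bounded_bilinear (\<lambda>(A::real^'n^'m) (B::real^'k^'n). A ** B)"
proof
  show "\<exists>K. \<forall>(A::real^'n^'m) (B::real^'k^'n). norm (A ** B) \<le> norm A * norm B * K"
    by (rule exI[of _ 1]) (simp add: norm_matrix_mult_le)
qed (simp_all add: matrix_add_ldistrib scalar_matrix_assoc matrix_scalar_ac,
     simp add: matrix_matrix_mult_def vec_eq_iff sum.distrib algebra_simps)

lemma bounded_linear_transpose: "bounded_linear (transpose :: real^'n^'m \<Rightarrow> real^'m^'n)"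
  by (rule bounded_linear_intro[where K = 1])
    (simp_all add: norm_transpose transpose_scalar, simp add: transpose_def vec_eq_iff)

lemma bounded_bilinear_matrix_mult_transpose:
  "bounded_bilinear (\<lambda>(A::real^'n^'m) (B::real^'n^'k). A ** transpose B)"
  using bounded_bilinear.comp[OF bounded_bilinear_matrix_mult bounded_linear_ident bounded_linear_transpose]
  by simp

lemma inner_matrix_mult_right: "A \<bullet> (B ** C) = (transpose B ** A) \<bullet> C"
  for A :: "real^'k^'m" and B :: "real^'n^'m" and C :: "real^'k^'n"
proof -
  have "A \<bullet> (B ** C) = (\<Sum>i\<in>UNIV. \<Sum>k\<in>UNIV. \<Sum>j\<in>UNIV. A$i$k * B$i$j * C$j$k)"
    by (simp add: inner_vec_def matrix_matrix_mult_def sum_distrib_left mult.assoc)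
  also have "\<dots> = (\<Sum>i\<in>UNIV. \<Sum>j\<in>UNIV. \<Sum>k\<in>UNIV. A$i$k * B$i$j * C$j$k)"
    by (rule sum.cong[OF refl], rule sum.swap)
  also have "\<dots> = (\<Sum>j\<in>UNIV. \<Sum>i\<in>UNIV. \<Sum>k\<in>UNIV. A$i$k * B$i$j * C$j$k)"
    by (rule sum.swap)
  also have "\<dots> = (\<Sum>j\<in>UNIV. \<Sum>k\<in>UNIV. \<Sum>i\<in>UNIV. A$i$k * B$i$j * C$j$k)"
    by (rule sum.cong[OF refl], rule sum.swap)
  also have "\<dots> = (transpose B ** A) \<bullet> C"
    by (simp add: inner_vec_def matrix_matrix_mult_def transpose_def sum_distrib_left
        sum_distrib_right mult_ac)
  finally show ?thesis .
qed

lemma inner_mult_transpose_mult_minus_mat_1: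
  fixes U :: "real^'n^'m"
  shows "U \<bullet> (U ** (transpose U ** U - mat 1))
    = (norm (transpose U ** U - mat 1))\<^sup>2 + (norm U)\<^sup>2 - real CARD('n)"
proof -
  have trace: "mat 1 \<bullet> (transpose U ** U) = (norm U)\<^sup>2"
    by (simp add: inner_matrix_mult_right power2_norm_eq_inner)
  have "mat 1 \<bullet> (mat 1 :: real^'n^'n) = real CARD('n)"
    by (simp add: inner_vec_def mat_def if_distrib cong: if_cong)
  then show ?thesis
    unfolding inner_matrix_mult_right
    by (simp add: trace inner_diff_left inner_diff_right power2_norm_eq_inner inner_commute)
qed

section \<open>The nonlinearity on the ball of radius \<open>sqrt m\<^sub>2\<close>\<close>

lemma norm_Nop_diff_le:
  fixes W U :: "real^'n^'m"
  assumes W: "norm W \<le> sqrt (real CARD('n))" and U: "norm U \<le> sqrt (real CARD('n))"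
    and \<kappa>: "\<kappa> \<ge> -1"
  shows "norm (Nop \<kappa> W - Nop \<kappa> U) \<le> (\<kappa> + 1 + 3 * real CARD('n)) * norm (W - U)"
proof -
  let ?m = "real CARD('n)" and ?d = "norm (W - U)"
  have prod_le: "norm X * norm Y \<le> ?m" if "norm X \<le> sqrt ?m" "norm Y \<le> sqrt ?m"
    for X Y :: "real^'n^'m"
    using mult_mono[OF that] by simp
  have diff: "Nop \<kappa> W - Nop \<kappa> U = (\<kappa> + 1) *\<^sub>R (W - U) -
      ((W - U) ** transpose W ** W + U ** transpose (W - U) ** W + U ** transpose U ** (W - U))"
    by (simp add: Nop_def fnl_def algebra_simps
        bounded_bilinear.diff_left[OF bounded_bilinear_matrix_mult]
        bounded_bilinear.diff_right[OF bounded_bilinear_matrix_mult]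
        linear_diff[OF bounded_linear.linear[OF bounded_linear_transpose]])
  have sum3: "norm (X + Y + Z) \<le> norm X + norm Y + norm Z" for X Y Z :: "real^'n^'m"
    using norm_triangle_ineq[of "X + Y" Z] norm_triangle_ineq[of X Y] by linarith
  have "norm ((\<kappa> + 1) *\<^sub>R (W - U)) = (\<kappa> + 1) * ?d"
    using \<kappa> by simp
  then have "norm (Nop \<kappa> W - Nop \<kappa> U)
      \<le> (\<kappa> + 1) * ?d + (?d * norm W * norm W + norm U * ?d * norm W + norm U * norm U * ?d)"
    unfolding diff using
      norm_matrix_mult_transpose_mult_le[of "W - U" W W]
      norm_matrix_mult_transpose_mult_le[of U "W - U" W]
      norm_matrix_mult_transpose_mult_le[of U U "W - U"]
      norm_triangle_ineq4[of "(\<kappa> + 1) *\<^sub>R (W - U)"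
        "(W - U) ** transpose W ** W + U ** transpose (W - U) ** W + U ** transpose U ** (W - U)"]
      sum3[of "(W - U) ** transpose W ** W" "U ** transpose (W - U) ** W" "U ** transpose U ** (W - U)"]
    by linarith
  also have "\<dots> = (\<kappa> + 1) * ?d + ?d * (norm W * norm W + norm U * norm W + norm U * norm U)"
    by (simp add: algebra_simps)
  also have "\<dots> \<le> (\<kappa> + 1) * ?d + ?d * (?m + ?m + ?m)"
    by (intro add_mono order_refl mult_left_mono prod_le W U norm_ge_zero)
  finally show ?thesis
    by (simp add: algebra_simps)
qed

text \<open>Writing \<open>Nop \<kappa> U = \<kappa> U - U M\<close> with \<open>M = U\<^sup>T U - I\<close>, the cross term is
  \<open>\<langle>U, U M\<rangle> = |M|\<^sup>2 + |U|\<^sup>2 - m\<close>, which dominates \<open>|U M|\<^sup>2 \<le> m |M|\<^sup>2\<close> once \<open>m \<le> 2\<kappa>\<close>.\<close>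
lemma Nop_norm_le:
  fixes U :: "real^'n^'m"
  assumes U: "norm U \<le> sqrt (real CARD('n))"
    and \<kappa>: "2 \<le> \<kappa>" "real CARD('n) \<le> 2 * \<kappa>"
  shows "norm (Nop \<kappa> U) \<le> \<kappa> * sqrt (real CARD('n))"
proof -
  let ?m = "real CARD('n)"
  define M where "M = transpose U ** U - mat 1"
  have Nop_eq: "Nop \<kappa> U = \<kappa> *\<^sub>R U - U ** M"
    by (simp add: Nop_def fnl_def M_def matrix_mul_assoc
        bounded_bilinear.diff_right[OF bounded_bilinear_matrix_mult])
  have U2: "(norm U)\<^sup>2 \<le> ?m"
    using U by (metis norm_ge_zero of_nat_0_le_iff power_mono real_sqrt_pow2)
  have inner_UM: "U \<bullet> (U ** M) = (norm M)\<^sup>2 + (norm U)\<^sup>2 - ?m"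
    unfolding M_def by (rule inner_mult_transpose_mult_minus_mat_1)
  have UM: "(norm (U ** M))\<^sup>2 \<le> ?m * (norm M)\<^sup>2"
  proof -
    have "(norm (U ** M))\<^sup>2 \<le> (norm U)\<^sup>2 * (norm M)\<^sup>2"
      using power_mono[OF norm_matrix_mult_le[of U M], of 2] by (simp add: power_mult_distrib)
    also have "\<dots> \<le> ?m * (norm M)\<^sup>2"
      using U2 by (simp add: mult_right_mono)
    finally show ?thesis .
  qed
  have "(norm (Nop \<kappa> U))\<^sup>2 = \<kappa>\<^sup>2 * (norm U)\<^sup>2 - 2 * \<kappa> * (U \<bullet> (U ** M)) + (norm (U ** M))\<^sup>2"
    unfolding Nop_eq using dot_norm_neg[of "\<kappa> *\<^sub>R U" "U ** M"] by (simp add: power_mult_distrib)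
  also have "\<dots> \<le> \<kappa>\<^sup>2 * (norm U)\<^sup>2 - 2 * \<kappa> * ((norm M)\<^sup>2 + (norm U)\<^sup>2 - ?m) + ?m * (norm M)\<^sup>2"
    using UM by (simp add: inner_UM)
  also have "\<dots> = \<kappa>\<^sup>2 * ?m + (\<kappa>\<^sup>2 - 2 * \<kappa>) * ((norm U)\<^sup>2 - ?m) + (?m - 2 * \<kappa>) * (norm M)\<^sup>2"
    by (simp add: algebra_simps)
  also have "\<dots> \<le> \<kappa>\<^sup>2 * ?m"
  proof -
    have "(\<kappa>\<^sup>2 - 2 * \<kappa>) * ((norm U)\<^sup>2 - ?m) \<le> 0"
      using \<kappa> U2 by (intro mult_nonneg_nonpos) (auto simp: power2_eq_square)
    moreover have "(?m - 2 * \<kappa>) * (norm M)\<^sup>2 \<le> 0"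
      using \<kappa> by (simp add: mult_nonpos_nonneg)
    ultimately show ?thesis
      by linarith
  qed
  also have "\<dots> = (\<kappa> * sqrt ?m)\<^sup>2"
    by (simp add: power_mult_distrib)
  finally show ?thesis
    using \<kappa> by (simp add: power2_le_iff_abs_le)
qed

section \<open>The heat semigroup and the Duhamel formula\<close>

lemma heat_kernel_eq_prod_normal_density:
  fixes x y :: "real^'d"
  assumes \<epsilon>: "\<epsilon> > 0" and t: "t > 0"
  shows "heat_kernel \<epsilon> t (x - y) = (\<Prod>b\<in>Basis. normal_density (x \<bullet> b) (sqrt (2 * \<epsilon>\<^sup>2 * t)) (y \<bullet> b))"
proof -
  let ?c = "4 * pi * \<epsilon>\<^sup>2 * t"
  have c: "?c > 0"
    using \<epsilon> t by simp
  have factor: "normal_density (x \<bullet> b) (sqrt (2 * \<epsilon>\<^sup>2 * t)) (y \<bullet> b)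
      = ?c powr (-1/2) * exp (- ((x - y) \<bullet> b)\<^sup>2 / (4 * \<epsilon>\<^sup>2 * t))" for b :: "real^'d"
  proof -
    have "1 / sqrt (2 * pi * (2 * \<epsilon>\<^sup>2 * t)) = ?c powr (-1/2)"
      using c by (simp add: powr_minus_divide powr_half_sqrt[symmetric] mult.assoc)
    then show ?thesis
      using \<epsilon> t by (simp add: normal_density_def inner_diff_left power2_commute mult.assoc)
  qed
  have power: "(?c powr (-1/2)) ^ CARD('d) = ?c powr (- real CARD('d) / 2)"
    using c by (subst powr_power) auto
  have "(norm (x - y))\<^sup>2 = (\<Sum>b\<in>Basis. ((x - y) \<bullet> b) * ((x - y) \<bullet> b))"
    unfolding power2_norm_eq_inner by (rule euclidean_inner)
  then have norm_sum: "(norm (x - y))\<^sup>2 = (\<Sum>b\<in>Basis. ((x - y) \<bullet> b)\<^sup>2)"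
    by (simp add: power2_eq_square)
  have "(\<Prod>b\<in>Basis. normal_density (x \<bullet> b) (sqrt (2 * \<epsilon>\<^sup>2 * t)) (y \<bullet> b))
      = (?c powr (-1/2)) ^ CARD('d) * exp (\<Sum>b\<in>(Basis :: (real^'d) set). - ((x - y) \<bullet> b)\<^sup>2 / (4 * \<epsilon>\<^sup>2 * t))"
    by (simp add: factor prod.distrib exp_sum)
  then show ?thesis
    unfolding heat_kernel_def norm_sum power by (simp add: sum_divide_distrib[symmetric] sum_negf)
qed

lemma nn_integral_heat_kernel:
  fixes x :: "real^'d"
  assumes \<epsilon>: "\<epsilon> > 0" and t: "t > 0"
  shows "(\<integral>\<^sup>+y. ennreal (heat_kernel \<epsilon> t (x - y)) \<partial>lborel) = 1"
proof -
  have \<sigma>: "sqrt (2 * \<epsilon>\<^sup>2 * t) > 0"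
    using \<epsilon> t by simp
  have "(\<integral>\<^sup>+y. ennreal (heat_kernel \<epsilon> t (x - y)) \<partial>lborel)
      = (\<integral>\<^sup>+y. (\<Prod>b\<in>Basis. ennreal (normal_density (x \<bullet> b) (sqrt (2 * \<epsilon>\<^sup>2 * t)) (y \<bullet> b))) \<partial>lborel)"
    by (simp add: heat_kernel_eq_prod_normal_density[OF \<epsilon> t] prod_ennreal)
  also have "\<dots> = (\<Prod>b\<in>(Basis :: (real^'d) set).
      (\<integral>\<^sup>+z. ennreal (normal_density (x \<bullet> b) (sqrt (2 * \<epsilon>\<^sup>2 * t)) z) \<partial>lborel))"
    by (rule nn_integral_lborel_prod) auto
  also have "\<dots> = 1"
    by (subst nn_integral_eq_integral)
      (auto intro: integrable_normal_density[OF \<sigma>] simp: integral_normal_density[OF \<sigma>])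
  finally show ?thesis .
qed

lemma heat_kernel_has_integral:
  fixes x :: "real^'d"
  assumes \<epsilon>: "\<epsilon> > 0" and t: "t > 0"
  shows "((\<lambda>y. heat_kernel \<epsilon> t (x - y)) has_integral 1) UNIV"
proof -
  have meas: "(\<lambda>y. heat_kernel \<epsilon> t (x - y)) \<in> borel_measurable lborel"
    unfolding heat_kernel_def by measurable
  have nonneg: "heat_kernel \<epsilon> t (x - y) \<ge> 0" for y
    unfolding heat_kernel_def by simp
  have integrable: "integrable lborel (\<lambda>y. heat_kernel \<epsilon> t (x - y))"
    by (rule integrableI_nonneg[OF meas]) (auto simp: nonneg nn_integral_heat_kernel[OF \<epsilon> t])
  have "integral\<^sup>L lborel (\<lambda>y. heat_kernel \<epsilon> t (x - y)) = 1"
    by (subst integral_eq_nn_integral[OF meas]) (auto simp: nonneg nn_integral_heat_kernel[OF \<epsilon> t])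
  with has_integral_integral_lborel[OF integrable] show ?thesis
    by simp
qed

text \<open>If the convolution integral does not exist, \<open>heat\<close> returns the junk value \<open>0\<close>,
  which also satisfies the bound.\<close>
lemma norm_heat_le:
  fixes g :: "real^'d \<Rightarrow> real^'n^'m"
  assumes \<epsilon>: "\<epsilon> > 0" and t: "t \<ge> 0" and g: "\<And>y. norm (g y) \<le> B"
  shows "norm (heat \<epsilon> t g x) \<le> B"
proof (cases "t = 0")
  case True
  then show ?thesis
    by (simp add: heat_def g)
next
  case False
  then have t: "t > 0"
    using t by simp
  have B: "B \<ge> 0"
    using g[of 0] norm_ge_zero order_trans by blast
  have kernel: "((\<lambda>y. heat_kernel \<epsilon> t (x - y) * B) has_integral B) UNIV"
    using has_integral_mult_left[OF heat_kernel_has_integral[OF \<epsilon> t]] by simp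
  have "norm (integral UNIV (\<lambda>y. heat_kernel \<epsilon> t (x - y) *\<^sub>R g y)) \<le> B"
  proof (cases "(\<lambda>y. heat_kernel \<epsilon> t (x - y) *\<^sub>R g y) integrable_on UNIV")
    case True
    have "norm (integral UNIV (\<lambda>y. heat_kernel \<epsilon> t (x - y) *\<^sub>R g y))
        \<le> integral UNIV (\<lambda>y. heat_kernel \<epsilon> t (x - y) * B)"
      using kernel g by (intro integral_norm_bound_integral[OF True])
        (auto simp: heat_kernel_def mult_left_mono)
    then show ?thesis
      unfolding integral_unique[OF kernel] .
  next
    case False
    then show ?thesis
      using B by (simp add: not_integrable_integral)
  qed
  then show ?thesis
    using t by (simp add: heat_def)
qed

lemma norm_semi_le:
  fixes g :: "real^'d \<Rightarrow> real^'n^'m"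
  assumes "\<epsilon> > 0" and "t \<ge> 0" and "\<And>y. norm (g y) \<le> B"
  shows "norm (semi \<epsilon> \<kappa> t g x) \<le> exp (- \<kappa> * t) * B"
  using norm_heat_le[OF assms, where x = x] by (simp add: semi_def mult_left_mono)

text \<open>The damping \<open>e\<^sup>-\<^sup>\<kappa>\<^sup>t\<close> makes the Duhamel formula a convex combination of
  \<open>U\<^sub>0\<close> and \<open>G / \<kappa>\<close>; this is the discrete maximum principle of the scheme.\<close>
lemma norm_duhamel_le:
  fixes U0 :: "real^'d \<Rightarrow> real^'n^'m"
  assumes \<epsilon>: "\<epsilon> > 0" and \<kappa>: "\<kappa> > 0" and s: "s \<ge> 0"
    and U0: "\<And>y. norm (U0 y) \<le> c"
    and G: "\<And>\<sigma> y. \<sigma> \<in> {0..s} \<Longrightarrow> norm (G \<sigma> y) \<le> \<kappa> * c"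
  shows "norm (duhamel \<epsilon> \<kappa> U0 G s x) \<le> c"
proof -
  have c: "c \<ge> 0"
    using U0[of 0] norm_ge_zero order_trans by blast
  have "((\<lambda>\<sigma>. exp (- \<kappa> * (s - \<sigma>)) * (\<kappa> * c)) has_integral
      (\<lambda>\<sigma>. c * exp (- \<kappa> * (s - \<sigma>))) s - (\<lambda>\<sigma>. c * exp (- \<kappa> * (s - \<sigma>))) 0) {0..s}"
    by (rule fundamental_theorem_of_calculus[OF s], unfold has_vector_derivative_def)
      (auto intro!: derivative_eq_intros simp: algebra_simps)
  then have exp_integral:
    "((\<lambda>\<sigma>. exp (- \<kappa> * (s - \<sigma>)) * (\<kappa> * c)) has_integral c * (1 - exp (- \<kappa> * s))) {0..s}"
    by (simp add: algebra_simps)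
  have "norm (integral {0..s} (\<lambda>\<sigma>. semi \<epsilon> \<kappa> (s - \<sigma>) (G \<sigma>) x)) \<le> c * (1 - exp (- \<kappa> * s))"
  proof (cases "(\<lambda>\<sigma>. semi \<epsilon> \<kappa> (s - \<sigma>) (G \<sigma>) x) integrable_on {0..s}")
    case True
    have "norm (integral {0..s} (\<lambda>\<sigma>. semi \<epsilon> \<kappa> (s - \<sigma>) (G \<sigma>) x))
        \<le> integral {0..s} (\<lambda>\<sigma>. exp (- \<kappa> * (s - \<sigma>)) * (\<kappa> * c))"
      using exp_integral G by (intro integral_norm_bound_integral[OF True] norm_semi_le[OF \<epsilon>]) auto
    then show ?thesis
      unfolding integral_unique[OF exp_integral] .
  next
    case False
    then show ?thesis
      using \<kappa> s c by (simp add: not_integrable_integral)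
  qed
  moreover have "norm (semi \<epsilon> \<kappa> s U0 x) \<le> exp (- \<kappa> * s) * c"
    by (rule norm_semi_le[OF \<epsilon> s U0])
  ultimately have "norm (duhamel \<epsilon> \<kappa> U0 G s x) \<le> exp (- \<kappa> * s) * c + c * (1 - exp (- \<kappa> * s))"
    unfolding duhamel_def
    using norm_triangle_ineq[of "semi \<epsilon> \<kappa> s U0 x" "integral {0..s} (\<lambda>\<sigma>. semi \<epsilon> \<kappa> (s - \<sigma>) (G \<sigma>) x)"]
    by linarith
  then show ?thesis
    by (simp add: algebra_simps)
qed

lemma duhamel_at_0 [simp]: "duhamel \<epsilon> \<kappa> U0 G 0 x = U0 x"
  by (simp add: duhamel_def semi_def heat_def)

lemma norm_le_SUP_norm:
  fixes f :: "real \<Rightarrow> 'a::real_normed_vector"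
  assumes "continuous_on {a..b} f" and "s \<in> {a..b}"
  shows "norm (f s) \<le> (SUP s\<in>{a..b}. norm (f s))"
proof -
  have "bounded (f ` {a..b})"
    by (rule compact_imp_bounded[OF compact_continuous_image[OF assms(1) compact_Icc]])
  then obtain B where "\<forall>y\<in>f ` {a..b}. norm y \<le> B"
    by (auto simp: bounded_iff)
  then have "bdd_above ((\<lambda>s. norm (f s)) ` {a..b})"
    by (auto intro!: bdd_aboveI[where M = B])
  then show ?thesis
    by (rule cSUP_upper[OF assms(2)])
qed

lemma alpha_eq_1:
  fixes P :: "real \<Rightarrow> real^'d \<Rightarrow> real^'n^'m"
  assumes "\<tau> \<ge> 0" and "continuous_on {0..\<tau>} (\<lambda>s. P s x)"
    and "(SUP s\<in>{0..\<tau>}. norm (P s x)) \<le> \<kappa> * sqrt (real CARD('n))"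
  shows "alpha \<kappa> \<tau> P x = 1"
proof -
  have "norm (P 0 x) \<le> (SUP s\<in>{0..\<tau>}. norm (P s x))"
    using assms by (intro norm_le_SUP_norm) auto
  then have "(SUP s\<in>{0..\<tau>}. norm (P s x)) \<ge> 0"
    using norm_ge_zero order_trans by blast
  then show ?thesis
    using assms(3) by (auto simp: alpha_def Let_def min_def field_simps)
qed

lemma norm_alpha_scaleR_le:
  fixes P :: "real \<Rightarrow> real^'d \<Rightarrow> real^'n^'m"
  assumes "\<kappa> \<ge> 0" and "continuous_on {0..\<tau>} (\<lambda>s. P s x)" and \<sigma>: "\<sigma> \<in> {0..\<tau>}"
  shows "norm (alpha \<kappa> \<tau> P x *\<^sub>R P \<sigma> x) \<le> \<kappa> * sqrt (real CARD('n))"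
proof -
  define M where "M = (SUP s\<in>{0..\<tau>}. norm (P s x))"
  define K where "K = \<kappa> * sqrt (real CARD('n))"
  have le_M: "norm (P \<sigma> x) \<le> M"
    unfolding M_def using assms by (intro norm_le_SUP_norm)
  have "K \<ge> 0"
    using assms by (simp add: K_def)
  show ?thesis
  proof (cases "M = 0")
    case True
    then show ?thesis
      using le_M \<open>K \<ge> 0\<close> by (simp add: alpha_def M_def K_def)
  next
    case False
    then have "M > 0"
      using le_M norm_ge_zero[of "P \<sigma> x"] by linarith
    have "norm (alpha \<kappa> \<tau> P x *\<^sub>R P \<sigma> x) = min (K / M) 1 * norm (P \<sigma> x)"
      using False \<open>K \<ge> 0\<close> \<open>M > 0\<close> by (simp add: alpha_def M_def[symmetric] K_def[symmetric])
    also have "\<dots> \<le> K / M * M"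
      using le_M \<open>K \<ge> 0\<close> \<open>M > 0\<close> by (intro mult_mono) auto
    finally show ?thesis
      using \<open>M > 0\<close> by (simp add: K_def)
  qed
qed

lemma norm_sub_alpha_scaleR_le:
  fixes P :: "real \<Rightarrow> real^'d \<Rightarrow> real^'n^'m"
  assumes "\<kappa> \<ge> 0" and "continuous_on {0..\<tau>} (\<lambda>s. P s x)" and s: "s \<in> {0..\<tau>}" and "D \<ge> 0"
    and SUP_le: "(SUP s\<in>{0..\<tau>}. norm (P s x)) \<le> \<kappa> * sqrt (real CARD('n)) + D"
  shows "norm (P s x - alpha \<kappa> \<tau> P x *\<^sub>R P s x) \<le> D"
proof -
  define M where "M = (SUP s\<in>{0..\<tau>}. norm (P s x))"
  define K where "K = \<kappa> * sqrt (real CARD('n))"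
  have le_M: "norm (P s x) \<le> M"
    unfolding M_def using assms by (intro norm_le_SUP_norm)
  show ?thesis
  proof (cases "M \<le> K")
    case True
    then have "alpha \<kappa> \<tau> P x = 1"
      using assms by (intro alpha_eq_1) (auto simp: M_def K_def)
    then show ?thesis
      using \<open>D \<ge> 0\<close> by simp
  next
    case False
    moreover have "K \<ge> 0"
      using assms by (simp add: K_def)
    ultimately have "M > 0" "alpha \<kappa> \<tau> P x = K / M" "1 - K / M \<ge> 0"
      by (auto simp: alpha_def M_def[symmetric] K_def[symmetric] Let_def min_def)
    then have "P s x - alpha \<kappa> \<tau> P x *\<^sub>R P s x = (1 - K / M) *\<^sub>R P s x"
      by (simp add: scaleR_diff_left)
    then have "norm (P s x - alpha \<kappa> \<tau> P x *\<^sub>R P s x) = (1 - K / M) * norm (P s x)"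
      using \<open>1 - K / M \<ge> 0\<close> by simp
    also have "\<dots> \<le> (1 - K / M) * M"
      using le_M \<open>1 - K / M \<ge> 0\<close> by (rule mult_left_mono)
    also have "\<dots> = M - K"
      using \<open>M > 0\<close> by (simp add: field_simps)
    finally show ?thesis
      using SUP_le by (simp add: M_def K_def)
  qed
qed

section \<open>Lagrange interpolation\<close>

lemma continuous_on_lagr: "continuous_on S (lagr a j \<tau> k)"
  unfolding lagr_def divide_inverse by (intro continuous_intros)

lemma lagr_at_node:
  assumes inj: "inj_on (\<lambda>i. a j i * \<tau>) {0..j}" and "k \<le> j" and "m \<le> j"
  shows "lagr a j \<tau> k (a j m * \<tau>) = (if k = m then 1 else 0)"
proof (cases "k = m")
  case True
  have "a j k * \<tau> \<noteq> a j i * \<tau>" if "i \<in> {0..j} - {k}" for i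
    using inj \<open>k \<le> j\<close> that by (auto dest: inj_onD)
  then show ?thesis
    using True by (simp add: lagr_def)
next
  case False
  then show ?thesis
    using \<open>m \<le> j\<close> by (auto simp: lagr_def prod_zero_iff)
qed

definition lagr_poly :: "(nat \<Rightarrow> nat \<Rightarrow> real) \<Rightarrow> nat \<Rightarrow> real \<Rightarrow> nat \<Rightarrow> real poly" where
  "lagr_poly a j \<tau> k = (\<Prod>i\<in>{0..j} - {k}. smult (1 / (a j k * \<tau> - a j i * \<tau>)) [:- (a j i * \<tau>), 1:])"

lemma poly_lagr_poly: "poly (lagr_poly a j \<tau> k) s = lagr a j \<tau> k s"
  unfolding lagr_poly_def lagr_def poly_prod
  by (intro prod.cong refl) (simp add: divide_inverse algebra_simps)

lemma degree_lagr_poly: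
  assumes "k \<le> j"
  shows "degree (lagr_poly a j \<tau> k) \<le> j"
proof -
  have "degree (lagr_poly a j \<tau> k)
      \<le> (\<Sum>i\<in>{0..j} - {k}. degree (smult (1 / (a j k * \<tau> - a j i * \<tau>)) [:- (a j i * \<tau>), 1:]))"
    unfolding lagr_poly_def
    using degree_prod_sum_le[of "{0..j} - {k}" "\<lambda>i. smult (1 / (a j k * \<tau> - a j i * \<tau>)) [:- (a j i * \<tau>), 1:]"]
    by (simp add: o_def)
  also have "\<dots> \<le> (\<Sum>i\<in>{0..j} - {k}. 1)"
    by (intro sum_mono order_trans[OF degree_smult_le]) simp
  also have "\<dots> = j"
    using assms by simp
  finally show ?thesis .
qed

text \<open>The interpolant of a polynomial of degree \<open>\<le> j\<close> differs from it by a polynomial of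
  degree \<open>\<le> j\<close> with \<open>j + 1\<close> roots.\<close>
lemma lagr_sum_poly:
  assumes inj: "inj_on (\<lambda>i. a j i * \<tau>) {0..j}" and p: "degree p \<le> j"
  shows "(\<Sum>k=0..j. lagr a j \<tau> k s * poly p (a j k * \<tau>)) = poly p s"
proof -
  define q where "q = (\<Sum>k=0..j. smult (poly p (a j k * \<tau>)) (lagr_poly a j \<tau> k)) - p"
  have "degree q \<le> j"
    unfolding q_def
    by (intro degree_diff_le degree_sum_le p order_trans[OF degree_smult_le] degree_lagr_poly) auto
  have root: "poly q (a j m * \<tau>) = 0" if "m \<le> j" for m
    using that
    by (simp add: q_def poly_sum poly_lagr_poly lagr_at_node[where a = a and j = j and \<tau> = \<tau>, OF inj] if_distrib[of "(*) _"] cong: if_cong)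
  have "q = 0"
  proof (rule ccontr)
    assume "q \<noteq> 0"
    have "Suc j = card ((\<lambda>i. a j i * \<tau>) ` {0..j})"
      by (simp add: card_image[OF inj])
    also have "\<dots> \<le> card {x. poly q x = 0}"
      using root by (intro card_mono poly_roots_finite \<open>q \<noteq> 0\<close>) auto
    also have "\<dots> \<le> j"
      using card_poly_roots_bound[OF \<open>q \<noteq> 0\<close>] \<open>degree q \<le> j\<close> by simp
    finally show False
      by simp
  qed
  then have "poly q s = 0"
    by simp
  then show ?thesis
    by (simp add: q_def poly_sum poly_lagr_poly mult.commute)
qed

lemma lagr_sum_taylor_poly:
  fixes c :: "nat \<Rightarrow> 'v::real_vector"
  assumes inj: "inj_on (\<lambda>i. a j i * \<tau>) {0..j}"
  shows "(\<Sum>k=0..j. lagr a j \<tau> k s *\<^sub>R (\<Sum>i<Suc j. ((a j k * \<tau>) ^ i / fact i) *\<^sub>R c i))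
       = (\<Sum>i<Suc j. (s ^ i / fact i) *\<^sub>R c i)"
proof -
  have monomial: "(\<Sum>k=0..j. lagr a j \<tau> k s * (a j k * \<tau>) ^ i) = s ^ i" if "i < Suc j" for i
    using lagr_sum_poly[where a = a and j = j and \<tau> = \<tau> and p = "monom 1 i" and s = s, OF inj] that by (simp add: poly_monom degree_monom_eq)
  have "(\<Sum>k=0..j. lagr a j \<tau> k s *\<^sub>R (\<Sum>i<Suc j. ((a j k * \<tau>) ^ i / fact i) *\<^sub>R c i))
      = (\<Sum>k=0..j. \<Sum>i<Suc j. (lagr a j \<tau> k s * (a j k * \<tau>) ^ i / fact i) *\<^sub>R c i)"
    by (rule sum.cong[OF refl]) (simp only: scaleR_sum_right scaleR_scaleR times_divide_eq_right)
  also have "\<dots> = (\<Sum>i<Suc j. \<Sum>k=0..j. (lagr a j \<tau> k s * (a j k * \<tau>) ^ i / fact i) *\<^sub>R c i)"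
    by (rule sum.swap)
  also have "\<dots> = (\<Sum>i<Suc j. ((\<Sum>k=0..j. lagr a j \<tau> k s * (a j k * \<tau>) ^ i) / fact i) *\<^sub>R c i)"
    by (simp add: scaleR_sum_left sum_divide_distrib)
  also have "\<dots> = (\<Sum>i<Suc j. (s ^ i / fact i) *\<^sub>R c i)"
    by (intro sum.cong refl) (simp add: monomial)
  finally show ?thesis .
qed

lemma inj_on_unif_nodes: "\<tau> > 0 \<Longrightarrow> j \<ge> 1 \<Longrightarrow> inj_on (\<lambda>i. unif_nodes j i * \<tau>) {0..j}"
  by (auto simp: inj_on_def unif_nodes_def)

text \<open>Each factor of the basis polynomial at uniform nodes is bounded by \<open>\<tau> / (\<tau>/r) = r\<close>.\<close>
lemma abs_lagr_unif_nodes_le: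
  assumes \<tau>: "\<tau> > 0" and r: "r \<ge> 1" and "k \<le> r" and s: "s \<in> {0..\<tau>}"
  shows "\<bar>lagr unif_nodes r \<tau> k s\<bar> \<le> real r ^ r"
proof -
  have factor: "\<bar>(s - unif_nodes r i * \<tau>) / (unif_nodes r k * \<tau> - unif_nodes r i * \<tau>)\<bar> \<le> real r"
    if i: "i \<in> {0..r} - {k}" for i
  proof -
    have "0 \<le> unif_nodes r i * \<tau>" "unif_nodes r i * \<tau> \<le> \<tau>"
      using i \<tau> r by (auto simp: unif_nodes_def field_simps)
    then have num: "\<bar>s - unif_nodes r i * \<tau>\<bar> \<le> \<tau>"
      using s by (auto simp: abs_le_iff)
    have "unif_nodes r k * \<tau> - unif_nodes r i * \<tau> = (real k - real i) * (\<tau> / real r)"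
      by (simp add: unif_nodes_def algebra_simps)
    moreover have "1 * (\<tau> / real r) \<le> \<bar>real k - real i\<bar> * (\<tau> / real r)"
      using i \<tau> by (intro mult_right_mono) auto
    ultimately have den: "\<tau> / real r \<le> \<bar>unif_nodes r k * \<tau> - unif_nodes r i * \<tau>\<bar>"
      using \<tau> by (simp add: abs_mult)
    have "\<bar>s - unif_nodes r i * \<tau>\<bar> / \<bar>unif_nodes r k * \<tau> - unif_nodes r i * \<tau>\<bar> \<le> \<tau> / (\<tau> / real r)"
      using num den \<tau> r by (intro frac_le) auto
    then show ?thesis
      using \<tau> by (simp add: abs_divide)
  qed
  have "\<bar>lagr unif_nodes r \<tau> k s\<bar>
      = (\<Prod>i\<in>{0..r} - {k}. \<bar>(s - unif_nodes r i * \<tau>) / (unif_nodes r k * \<tau> - unif_nodes r i * \<tau>)\<bar>)"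
    by (simp add: lagr_def abs_prod)
  also have "\<dots> \<le> (\<Prod>i\<in>{0..r} - {k}. real r)"
    by (rule prod_mono) (use factor in auto)
  also have "\<dots> = real r ^ r"
    using \<open>k \<le> r\<close> by simp
  finally show ?thesis .
qed

text \<open>Interpolation at the uniform nodes reproduces the Taylor polynomial of \<open>f\<close>, so only
  the Taylor remainders \<open>E\<close> at the nodes and at \<open>s\<close> contribute to the error.\<close>
lemma norm_lagr_interpolation_error_le:
  fixes f :: "real \<Rightarrow> 'v::real_normed_vector"
  assumes \<tau>: "\<tau> > 0" and r: "r \<ge> 1" and s: "s \<in> {0..\<tau>}"
    and taylor: "\<And>\<sigma>. \<sigma> \<in> {0..\<tau>} \<Longrightarrow> norm (f \<sigma> - (\<Sum>i<Suc r. (\<sigma> ^ i / fact i) *\<^sub>R c i)) \<le> E"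
  shows "norm ((\<Sum>k=0..r. lagr unif_nodes r \<tau> k s *\<^sub>R f (unif_nodes r k * \<tau>)) - f s)
    \<le> (real (Suc r) * real r ^ r + 1) * E"
proof -
  define p where "p \<sigma> = (\<Sum>i<Suc r. (\<sigma> ^ i / fact i) *\<^sub>R c i)" for \<sigma>
  define R where "R \<sigma> = f \<sigma> - p \<sigma>" for \<sigma>
  have node: "unif_nodes r k * \<tau> \<in> {0..\<tau>}" if "k \<le> r" for k
    using that \<tau> r by (auto simp: unif_nodes_def field_simps)
  have "(\<Sum>k=0..r. lagr unif_nodes r \<tau> k s *\<^sub>R f (unif_nodes r k * \<tau>))
      = (\<Sum>k=0..r. lagr unif_nodes r \<tau> k s *\<^sub>R p (unif_nodes r k * \<tau>))
        + (\<Sum>k=0..r. lagr unif_nodes r \<tau> k s *\<^sub>R R (unif_nodes r k * \<tau>))"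
    by (simp add: R_def scaleR_diff_right sum_subtractf)
  also have "(\<Sum>k=0..r. lagr unif_nodes r \<tau> k s *\<^sub>R p (unif_nodes r k * \<tau>)) = p s"
    unfolding p_def by (rule lagr_sum_taylor_poly[where a = unif_nodes and j = r and \<tau> = \<tau>, OF inj_on_unif_nodes[OF \<tau> r]])
  finally have "(\<Sum>k=0..r. lagr unif_nodes r \<tau> k s *\<^sub>R f (unif_nodes r k * \<tau>)) - f s
      = (\<Sum>k=0..r. lagr unif_nodes r \<tau> k s *\<^sub>R R (unif_nodes r k * \<tau>)) - R s"
    by (simp add: R_def)
  also have "norm \<dots> \<le> (\<Sum>k=0..r. norm (lagr unif_nodes r \<tau> k s *\<^sub>R R (unif_nodes r k * \<tau>))) + norm (R s)"
    by (rule order_trans[OF norm_triangle_ineq4 add_right_mono[OF norm_sum]])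
  also have "\<dots> \<le> (\<Sum>k=0..r. real r ^ r * E) + E"
  proof (intro add_mono sum_mono)
    fix k
    assume "k \<in> {0..r}"
    then show "norm (lagr unif_nodes r \<tau> k s *\<^sub>R R (unif_nodes r k * \<tau>)) \<le> real r ^ r * E"
      using abs_lagr_unif_nodes_le[OF \<tau> r _ s] taylor[OF node] unfolding R_def p_def
      by (auto intro: mult_mono)
  qed (use taylor[OF s] in \<open>simp add: R_def p_def\<close>)
  also have "\<dots> = (real (Suc r) * real r ^ r + 1) * E"
    by (simp add: algebra_simps)
  finally show ?thesis .
qed

section \<open>Higher derivatives of bilinear products and Taylor remainders\<close>

definition leibniz_sum ::
    "('a \<Rightarrow> 'b \<Rightarrow> 'c::real_vector) \<Rightarrow> (nat \<Rightarrow> real \<Rightarrow> 'a) \<Rightarrow> (nat \<Rightarrow> real \<Rightarrow> 'b) \<Rightarrow> nat \<Rightarrow> real \<Rightarrow> 'c" where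
  "leibniz_sum pr F G n t = (\<Sum>i\<le>n. real (n choose i) *\<^sub>R pr (F i t) (G (n - i) t))"

lemma leibniz_sum_0 [simp]: "leibniz_sum pr F G 0 t = pr (F 0 t) (G 0 t)"
  by (simp add: leibniz_sum_def)

lemma sum_choose_scaleR_Suc:
  fixes T :: "nat \<Rightarrow> 'v::real_vector"
  shows "(\<Sum>i\<le>n. real (n choose i) *\<^sub>R (T (Suc i) + T i)) = (\<Sum>i\<le>Suc n. real (Suc n choose i) *\<^sub>R T i)"
proof -
  have shift: "(\<Sum>i\<le>Suc n. real (n choose i) *\<^sub>R T i) = T 0 + (\<Sum>i\<le>n. real (n choose Suc i) *\<^sub>R T (Suc i))"
    by (subst sum.atMost_Suc_shift) simp
  have "(\<Sum>i\<le>Suc n. real (Suc n choose i) *\<^sub>R T i) = T 0 + (\<Sum>i\<le>n. real (Suc n choose Suc i) *\<^sub>R T (Suc i))"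
    by (subst sum.atMost_Suc_shift) simp
  also have "\<dots> = T 0 + (\<Sum>i\<le>n. real (n choose i) *\<^sub>R T (Suc i)) + (\<Sum>i\<le>n. real (n choose Suc i) *\<^sub>R T (Suc i))"
    by (simp add: scaleR_add_left sum.distrib)
  also have "\<dots> = (\<Sum>i\<le>n. real (n choose i) *\<^sub>R T (Suc i)) + (\<Sum>i\<le>n. real (n choose i) *\<^sub>R T i)"
    using shift by (simp add: algebra_simps binomial_eq_0)
  also have "\<dots> = (\<Sum>i\<le>n. real (n choose i) *\<^sub>R (T (Suc i) + T i))"
    by (simp add: scaleR_add_right sum.distrib)
  finally show ?thesis
    by simp
qed

lemma has_vector_derivative_leibniz_sum:
  assumes pr: "bounded_bilinear pr"
    and F: "\<And>m t. m < p \<Longrightarrow> t \<in> S \<Longrightarrow> (F m has_vector_derivative F (Suc m) t) (at t within S)"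
    and G: "\<And>m t. m < p \<Longrightarrow> t \<in> S \<Longrightarrow> (G m has_vector_derivative G (Suc m) t) (at t within S)"
    and "n < p" and "t \<in> S"
  shows "(leibniz_sum pr F G n has_vector_derivative leibniz_sum pr F G (Suc n) t) (at t within S)"
proof -
  define T where "T i = pr (F i t) (G (Suc n - i) t)" for i
  have "((\<lambda>t. pr (F i t) (G (n - i) t)) has_vector_derivative T (Suc i) + T i) (at t within S)"
    if "i \<le> n" for i
    using bounded_bilinear.has_vector_derivative[OF pr F[of i t] G[of "n - i" t]] that assms(4,5)
    by (simp add: T_def Suc_diff_le add.commute)
  then have "(leibniz_sum pr F G n has_vector_derivative
      (\<Sum>i\<le>n. real (n choose i) *\<^sub>R (T (Suc i) + T i))) (at t within S)"
    unfolding leibniz_sum_def[abs_def]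
    by (intro has_vector_derivative_sum bounded_linear.has_vector_derivative[OF bounded_linear_scaleR_right]) auto
  then show ?thesis
    by (simp only: sum_choose_scaleR_Suc) (simp add: leibniz_sum_def T_def)
qed

lemma norm_leibniz_sum_le:
  assumes pr: "\<And>a b. norm (pr a b) \<le> norm a * norm b"
    and F: "\<And>i. i \<le> n \<Longrightarrow> norm (F i t) \<le> B\<^sub>1"
    and G: "\<And>i. i \<le> n \<Longrightarrow> norm (G i t) \<le> B\<^sub>2"
  shows "norm (leibniz_sum pr F G n t) \<le> 2 ^ n * (B\<^sub>1 * B\<^sub>2)"
proof -
  have "B\<^sub>1 \<ge> 0"
    using F[of 0] norm_ge_zero order_trans by blast
  have "norm (pr (F i t) (G (n - i) t)) \<le> B\<^sub>1 * B\<^sub>2" if "i \<le> n" for i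
    using pr[of "F i t" "G (n - i) t"] mult_mono[OF F[of i] G[of "n - i"]] that \<open>B\<^sub>1 \<ge> 0\<close> by force
  then have "norm (leibniz_sum pr F G n t) \<le> (\<Sum>i\<le>n. real (n choose i) * (B\<^sub>1 * B\<^sub>2))"
    unfolding leibniz_sum_def by (intro order_trans[OF norm_sum] sum_mono) (simp add: mult_left_mono)
  also have "\<dots> = 2 ^ n * (B\<^sub>1 * B\<^sub>2)"
    by (simp add: sum_distrib_right[symmetric] choose_row_sum flip: of_nat_sum)
  finally show ?thesis .
qed

lemma norm_Taylor_remainder_le:
  fixes V :: "nat \<Rightarrow> real \<Rightarrow> 'v::banach"
  assumes V: "\<And>m t. m < Suc r \<Longrightarrow> t \<in> {0..T} \<Longrightarrow> (V m has_vector_derivative V (Suc m) t) (at t within {0..T})"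
    and bound: "\<And>t. t \<in> {0..T} \<Longrightarrow> norm (V (Suc r) t) \<le> K"
    and "0 \<le> t\<^sub>0" "0 \<le> \<sigma>" "t\<^sub>0 + \<sigma> \<le> T"
  shows "norm (V 0 (t\<^sub>0 + \<sigma>) - (\<Sum>i<Suc r. (\<sigma> ^ i / fact i) *\<^sub>R V i t\<^sub>0)) \<le> K * \<sigma> ^ Suc r / fact r"
proof -
  have sub: "{t\<^sub>0..t\<^sub>0 + \<sigma>} \<subseteq> {0..T}"
    using assms by auto
  have integral: "((\<lambda>t. ((t\<^sub>0 + \<sigma> - t) ^ r / fact r) *\<^sub>R V (Suc r) t) has_integral
      V 0 (t\<^sub>0 + \<sigma>) - (\<Sum>i<Suc r. (\<sigma> ^ i / fact i) *\<^sub>R V i t\<^sub>0)) {t\<^sub>0..t\<^sub>0 + \<sigma>}"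
  proof -
    have "(V m has_vector_derivative V (Suc m) t) (at t within {t\<^sub>0..t\<^sub>0 + \<sigma>})"
      if "m < Suc r" "t \<in> {t\<^sub>0..t\<^sub>0 + \<sigma>}" for m t
      using V[of m t] that sub by (blast intro: has_vector_derivative_within_subset)
    then show ?thesis
      using Taylor_has_integral[of "Suc r" V "V 0" t\<^sub>0 "t\<^sub>0 + \<sigma>"] assms(4)
      by (simp del: sum.lessThan_Suc)
  qed
  have integrand: "norm (((t\<^sub>0 + \<sigma> - t) ^ r / fact r) *\<^sub>R V (Suc r) t) \<le> \<sigma> ^ r / fact r * K"
    if "t \<in> {t\<^sub>0..t\<^sub>0 + \<sigma>} - {}" for t
  proof -
    have "\<bar>t\<^sub>0 + \<sigma> - t\<bar> ^ r \<le> \<sigma> ^ r"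
      using that by (intro power_mono) auto
    moreover have "norm (V (Suc r) t) \<le> K"
      using bound sub that by auto
    moreover have "\<sigma> ^ r \<ge> 0"
      using \<open>0 \<le> \<sigma>\<close> by simp
    ultimately show ?thesis
      by (auto simp: abs_mult power_abs intro!: mult_mono divide_right_mono)
  qed
  have "t\<^sub>0 \<in> {0..T}"
    using assms by simp
  then have "K \<ge> 0"
    using bound order_trans[OF norm_ge_zero] by blast
  then have "norm (V 0 (t\<^sub>0 + \<sigma>) - (\<Sum>i<Suc r. (\<sigma> ^ i / fact i) *\<^sub>R V i t\<^sub>0))
      \<le> \<sigma> ^ r / fact r * K * measure lborel {t\<^sub>0..t\<^sub>0 + \<sigma>}"
    using \<open>0 \<le> \<sigma>\<close> by (intro has_integral_bound_real[OF _ finite.emptyI integral integrand]) simp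
  then show ?thesis
    using \<open>0 \<le> \<sigma>\<close> by (simp add: mult_ac)
qed

text \<open>With \<open>D\<close> the derivatives of a curve \<open>u\<close>, the derivatives of
  \<open>Nop \<kappa> u = (\<kappa> + 1) u - u u\<^sup>T u\<close> are obtained by applying the Leibniz rule twice.\<close>
lemma Nop_curve_derivatives:
  fixes D :: "nat \<Rightarrow> real \<Rightarrow> real^'n^'m"
  assumes "\<kappa> \<ge> -1"
    and D: "\<And>i t. i < Suc r \<Longrightarrow> t \<in> {0..T} \<Longrightarrow> (D i has_vector_derivative D (Suc i) t) (at t within {0..T})"
    and bound: "\<And>i t. i \<le> Suc r \<Longrightarrow> t \<in> {0..T} \<Longrightarrow> norm (D i t) \<le> K"
  obtains V where "\<And>t. V 0 t = Nop \<kappa> (D 0 t)"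
    and "\<And>i t. i < Suc r \<Longrightarrow> t \<in> {0..T} \<Longrightarrow> (V i has_vector_derivative V (Suc i) t) (at t within {0..T})"
    and "\<And>t. t \<in> {0..T} \<Longrightarrow> norm (V (Suc r) t) \<le> (\<kappa> + 1) * K + 4 ^ Suc r * K ^ 3"
proof
  define A where "A = leibniz_sum (\<lambda>(X::real^'n^'m) (Y::real^'n^'m). X ** transpose Y) D D"
  define C where "C = leibniz_sum (\<lambda>(X::real^'m^'m) (Y::real^'n^'m). X ** Y) A D"
  define V where "V i t = (\<kappa> + 1) *\<^sub>R D i t - C i t" for i t
  show "V 0 t = Nop \<kappa> (D 0 t)" for t
    by (simp add: V_def C_def A_def Nop_def fnl_def algebra_simps)
  have A: "(A i has_vector_derivative A (Suc i) t) (at t within {0..T})"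
    if "i < Suc r" "t \<in> {0..T}" for i t
    using has_vector_derivative_leibniz_sum[where F = D and G = D and S = "{0..T}" and p = "Suc r",
        OF bounded_bilinear_matrix_mult_transpose D D that]
    unfolding A_def .
  show "(V i has_vector_derivative V (Suc i) t) (at t within {0..T})"
    if "i < Suc r" "t \<in> {0..T}" for i t
    unfolding V_def C_def
    using has_vector_derivative_leibniz_sum[where F = A and G = D and S = "{0..T}" and p = "Suc r",
        OF bounded_bilinear_matrix_mult A D that] D[OF that]
    by (intro has_vector_derivative_diff bounded_linear.has_vector_derivative[OF bounded_linear_scaleR_right])
  show "norm (V (Suc r) t) \<le> (\<kappa> + 1) * K + 4 ^ Suc r * K ^ 3" if t: "t \<in> {0..T}" for t
  proof -
    have "K \<ge> 0"
      using bound[of 0 t] t order_trans[OF norm_ge_zero] by blast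
    have "norm (A i t) \<le> 2 ^ Suc r * (K * K)" if "i \<le> Suc r" for i
    proof -
      have "norm (A i t) \<le> 2 ^ i * (K * K)"
        unfolding A_def using bound that t
        by (intro norm_leibniz_sum_le) (auto simp: norm_transpose intro: order_trans[OF norm_matrix_mult_le])
      also have "\<dots> \<le> 2 ^ Suc r * (K * K)"
        using that \<open>K \<ge> 0\<close> by (intro mult_right_mono power_increasing) auto
      finally show ?thesis .
    qed
    then have "norm (C (Suc r) t) \<le> 2 ^ Suc r * (2 ^ Suc r * (K * K) * K)"
      unfolding C_def using bound t by (intro norm_leibniz_sum_le norm_matrix_mult_le) auto
    moreover have "norm ((\<kappa> + 1) *\<^sub>R D (Suc r) t) \<le> (\<kappa> + 1) * K"
      using bound[of "Suc r" t] t assms(1) by (simp add: mult_left_mono)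
    moreover have "2 ^ Suc r * (2 ^ Suc r * (K * K) * K) = (4::real) ^ Suc r * K ^ 3"
      by (simp add: power3_eq_cube mult_ac flip: power_mult_distrib)
    ultimately show ?thesis
      unfolding V_def using norm_triangle_ineq4[of "(\<kappa> + 1) *\<^sub>R D (Suc r) t" "C (Suc r) t"]
      by linarith
  qed
qed

lemma Nop_curve_taylor:
  fixes D :: "nat \<Rightarrow> real \<Rightarrow> real^'n^'m"
  assumes "\<kappa> \<ge> -1"
    and D: "\<And>i t. i < Suc r \<Longrightarrow> t \<in> {0..T} \<Longrightarrow> (D i has_vector_derivative D (Suc i) t) (at t within {0..T})"
    and bound: "\<And>i t. i \<le> Suc r \<Longrightarrow> t \<in> {0..T} \<Longrightarrow> norm (D i t) \<le> K"
    and "0 \<le> t\<^sub>0"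
  obtains c where "\<And>\<sigma>. 0 \<le> \<sigma> \<Longrightarrow> t\<^sub>0 + \<sigma> \<le> T \<Longrightarrow>
      norm (Nop \<kappa> (D 0 (t\<^sub>0 + \<sigma>)) - (\<Sum>i<Suc r. (\<sigma> ^ i / fact i) *\<^sub>R c i))
        \<le> ((\<kappa> + 1) * K + 4 ^ Suc r * K ^ 3) * \<sigma> ^ Suc r / fact r"
proof -
  obtain V where V0: "\<And>t. V 0 t = Nop \<kappa> (D 0 t)"
    and V: "\<And>i t. i < Suc r \<Longrightarrow> t \<in> {0..T} \<Longrightarrow> (V i has_vector_derivative V (Suc i) t) (at t within {0..T})"
    and V_bound: "\<And>t. t \<in> {0..T} \<Longrightarrow> norm (V (Suc r) t) \<le> (\<kappa> + 1) * K + 4 ^ Suc r * K ^ 3"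
    using Nop_curve_derivatives[where r = r and T = T and D = D, OF assms(1) D bound] by blast
  show ?thesis
    using norm_Taylor_remainder_le[OF V V_bound \<open>0 \<le> t\<^sub>0\<close>] by (intro that[of "\<lambda>i. V i t\<^sub>0"]) (simp add: V0)
qed

lemma norm_Ck_derivs_le:
  assumes U: "Ck_derivs q T U Ds" and "i \<le> q" and t: "t \<in> {0..T}"
  shows "norm (Ds i t) \<le> Ck_norm q T Ds"
proof -
  have "continuous_on {0..T} (Ds i)"
  proof (cases "i < q")
    case True
    then have "(Ds i has_vector_derivative Ds (Suc i) t) (at t within {0..T})" if "t \<in> {0..T}" for t
      using U that by (simp add: Ck_derivs_def)
    then show ?thesis
      unfolding continuous_on_eq_continuous_within by (blast intro: has_vector_derivative_continuous)
  next
    case False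
    then show ?thesis
      using U \<open>i \<le> q\<close> by (simp add: Ck_derivs_def)
  qed
  then have "norm (Ds i t) \<le> (SUP t\<in>{0..T}. norm (Ds i t))"
    using t by (rule norm_le_SUP_norm)
  also have "\<dots> \<le> Ck_norm q T Ds"
    unfolding Ck_norm_def using \<open>i \<le> q\<close> by (intro Max_ge) auto
  finally show ?thesis .
qed

lemma bounded_linear_apply_bcontfun: "bounded_linear (\<lambda>f. apply_bcontfun f x)"
  by (rule bounded_linear_intro[where K = 1]) (auto simp: norm_bounded)

lemma Ck_derivs_apply_has_vector_derivative:
  assumes "Ck_derivs q T U Ds" and "i < q" and "t \<in> {0..T}"
  shows "((\<lambda>t. apply_bcontfun (Ds i t) x) has_vector_derivative apply_bcontfun (Ds (Suc i) t) x)
    (at t within {0..T})"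
  using assms unfolding Ck_derivs_def
  by (auto intro!: bounded_linear.has_vector_derivative[OF bounded_linear_apply_bcontfun])

lemma Wn_at_0: "Wn a \<epsilon> \<kappa> \<tau> Vn j 0 x = Vn x"
  by (cases "j - 1") (simp_all add: Wn_def Let_def)

lemma continuous_on_Pint: "continuous_on S (\<lambda>s. Pint a \<kappa> \<tau> j Vn W s x)"
  unfolding Pint_def by (intro continuous_intros continuous_on_lagr)

lemma norm_Wn_le:
  fixes Vn :: "real^'d \<Rightarrow> real^'n^'m"
  assumes \<epsilon>: "\<epsilon> > 0" and \<kappa>: "2 \<le> \<kappa>" "real CARD('n) \<le> 2 * \<kappa>"
    and Vn: "\<And>y. norm (Vn y) \<le> sqrt (real CARD('n))" and \<sigma>: "\<sigma> \<in> {0..\<tau>}"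
  shows "norm (Wn a \<epsilon> \<kappa> \<tau> Vn j \<sigma> x) \<le> sqrt (real CARD('n))"
proof (cases "j - 1")
  case 0
  show ?thesis
    unfolding Wn_def 0 using \<epsilon> \<kappa> \<sigma> Nop_norm_le[OF Vn \<kappa>]
    by (simp, intro norm_duhamel_le[OF \<epsilon> _ _ Vn]) auto
next
  case (Suc i)
  define P where "P = Pint a \<kappa> \<tau> (Suc i) Vn (Wsch a \<epsilon> \<kappa> \<tau> Vn i)"
  have "norm (duhamel \<epsilon> \<kappa> Vn (\<lambda>\<sigma> y. alpha \<kappa> \<tau> P y *\<^sub>R P \<sigma> y) \<sigma> x) \<le> sqrt (real CARD('n))"
    using \<epsilon> \<kappa> \<sigma> unfolding P_def
    by (intro norm_duhamel_le[OF \<epsilon> _ _ Vn] norm_alpha_scaleR_le continuous_on_Pint) auto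
  then show ?thesis
    unfolding Wn_def Suc by (simp add: P_def Let_def)
qed

lemma unif_nodes_0 [simp]: "unif_nodes j 0 = 0"
  by (simp add: unif_nodes_def)

lemma Pn_eq_lagr_sum:
  assumes "a j 0 = 0"
  shows "Pn a \<epsilon> \<kappa> \<tau> Vn j s x = (\<Sum>k=0..j. lagr a j \<tau> k s *\<^sub>R Nop \<kappa> (Wn a \<epsilon> \<kappa> \<tau> Vn j (a j k * \<tau>) x))"
  unfolding Pn_def Pint_def by (intro sum.cong refl) (simp add: assms Wn_at_0)

section \<open>The rescaling error\<close>

lemma norm_lagr_sum_Nop_diff_le:
  fixes w u :: "nat \<Rightarrow> real^'n^'m"
  assumes \<tau>: "\<tau> > 0" and r: "r \<ge> 1" and s: "s \<in> {0..\<tau>}" and \<kappa>: "3 * real CARD('n) + 1 \<le> \<kappa>"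
    and w: "\<And>k. k \<le> r \<Longrightarrow> norm (w k) \<le> sqrt (real CARD('n))"
    and u: "\<And>k. k \<le> r \<Longrightarrow> norm (u k) \<le> sqrt (real CARD('n))"
  shows "norm ((\<Sum>k=0..r. lagr unif_nodes r \<tau> k s *\<^sub>R Nop \<kappa> (w k))
      - (\<Sum>k=0..r. lagr unif_nodes r \<tau> k s *\<^sub>R Nop \<kappa> (u k)))
    \<le> 2 * \<kappa> * real r ^ r * (\<Sum>k=0..r. norm (w k - u k))"
proof -
  have "norm (lagr unif_nodes r \<tau> k s *\<^sub>R (Nop \<kappa> (w k) - Nop \<kappa> (u k)))
      \<le> real r ^ r * (2 * \<kappa> * norm (w k - u k))" if "k \<in> {0..r}" for k
  proof -
    have "norm (Nop \<kappa> (w k) - Nop \<kappa> (u k)) \<le> (\<kappa> + 1 + 3 * real CARD('n)) * norm (w k - u k)"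
      using that \<kappa> by (intro norm_Nop_diff_le w u) auto
    also have "\<dots> \<le> 2 * \<kappa> * norm (w k - u k)"
      using \<kappa> by (intro mult_right_mono) auto
    finally show ?thesis
      using abs_lagr_unif_nodes_le[OF \<tau> r _ s, of k] that by (simp add: mult_mono)
  qed
  then have "norm (\<Sum>k=0..r. lagr unif_nodes r \<tau> k s *\<^sub>R (Nop \<kappa> (w k) - Nop \<kappa> (u k)))
      \<le> (\<Sum>k=0..r. real r ^ r * (2 * \<kappa> * norm (w k - u k)))"
    by (intro order_trans[OF norm_sum] sum_mono)
  then show ?thesis
    by (simp add: scaleR_diff_right sum_subtractf sum_distrib_left mult_ac)
qed

definition interp_error_const :: "real \<Rightarrow> nat \<Rightarrow> real \<Rightarrow> real" where
  "interp_error_const \<kappa> r K = (real (Suc r) * real r ^ r + 1) * ((\<kappa> + 1) * K + 4 ^ Suc r * K ^ 3) / fact r"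

lemma norm_lagr_sum_Nop_curve_sub_le:
  fixes D :: "nat \<Rightarrow> real \<Rightarrow> real^'n^'m"
  assumes \<tau>: "\<tau> > 0" and r: "r \<ge> 1" and s: "s \<in> {0..\<tau>}" and "\<kappa> \<ge> -1"
    and D: "\<And>i t. i < Suc r \<Longrightarrow> t \<in> {0..T} \<Longrightarrow> (D i has_vector_derivative D (Suc i) t) (at t within {0..T})"
    and bound: "\<And>i t. i \<le> Suc r \<Longrightarrow> t \<in> {0..T} \<Longrightarrow> norm (D i t) \<le> K"
    and t\<^sub>0: "0 \<le> t\<^sub>0" "t\<^sub>0 + \<tau> \<le> T"
  shows "norm ((\<Sum>k=0..r. lagr unif_nodes r \<tau> k s *\<^sub>R Nop \<kappa> (D 0 (t\<^sub>0 + unif_nodes r k * \<tau>)))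
      - Nop \<kappa> (D 0 (t\<^sub>0 + s)))
    \<le> interp_error_const \<kappa> r K * \<tau> ^ (r + 1)"
proof -
  define K' where "K' = (\<kappa> + 1) * K + 4 ^ Suc r * K ^ 3"
  obtain c where c: "\<And>\<sigma>. 0 \<le> \<sigma> \<Longrightarrow> t\<^sub>0 + \<sigma> \<le> T \<Longrightarrow>
      norm (Nop \<kappa> (D 0 (t\<^sub>0 + \<sigma>)) - (\<Sum>i<Suc r. (\<sigma> ^ i / fact i) *\<^sub>R c i)) \<le> K' * \<sigma> ^ Suc r / fact r"
    using Nop_curve_taylor[where r = r and T = T and D = D, OF \<open>\<kappa> \<ge> -1\<close> D bound t\<^sub>0(1)]
    unfolding K'_def by blast
  have "t\<^sub>0 \<in> {0..T}"
    using t\<^sub>0 \<tau> by simp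
  then have "K \<ge> 0"
    using bound order_trans[OF norm_ge_zero] by blast
  then have "K' \<ge> 0"
    using \<open>\<kappa> \<ge> -1\<close> by (simp add: K'_def)
  have "norm (Nop \<kappa> (D 0 (t\<^sub>0 + \<sigma>)) - (\<Sum>i<Suc r. (\<sigma> ^ i / fact i) *\<^sub>R c i)) \<le> K' * \<tau> ^ Suc r / fact r"
    if "\<sigma> \<in> {0..\<tau>}" for \<sigma>
  proof -
    have "norm (Nop \<kappa> (D 0 (t\<^sub>0 + \<sigma>)) - (\<Sum>i<Suc r. (\<sigma> ^ i / fact i) *\<^sub>R c i)) \<le> K' * \<sigma> ^ Suc r / fact r"
      using that t\<^sub>0 by (intro c) auto
    also have "\<dots> \<le> K' * \<tau> ^ Suc r / fact r"
      using that \<open>K' \<ge> 0\<close> by (intro divide_right_mono mult_left_mono power_mono) auto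
    finally show ?thesis .
  qed
  then have "norm ((\<Sum>k=0..r. lagr unif_nodes r \<tau> k s *\<^sub>R Nop \<kappa> (D 0 (t\<^sub>0 + unif_nodes r k * \<tau>)))
      - Nop \<kappa> (D 0 (t\<^sub>0 + s))) \<le> (real (Suc r) * real r ^ r + 1) * (K' * \<tau> ^ Suc r / fact r)"
    by (rule norm_lagr_interpolation_error_le[OF \<tau> r s, where f = "\<lambda>\<sigma>. Nop \<kappa> (D 0 (t\<^sub>0 + \<sigma>))"])
  then show ?thesis
    by (simp add: interp_error_const_def K'_def)
qed

lemma norm_Pn_unif_nodes_le:
  fixes D :: "nat \<Rightarrow> real \<Rightarrow> real^'n^'m" and Vn :: "real^'d \<Rightarrow> real^'n^'m"
  assumes \<epsilon>: "\<epsilon> > 0" and \<tau>: "\<tau> > 0" and r: "r \<ge> 1" and s: "s \<in> {0..\<tau>}"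
    and \<kappa>: "3 * real CARD('n) + 1 \<le> \<kappa>"
    and D: "\<And>i t. i < Suc r \<Longrightarrow> t \<in> {0..T} \<Longrightarrow> (D i has_vector_derivative D (Suc i) t) (at t within {0..T})"
    and bound: "\<And>i t. i \<le> Suc r \<Longrightarrow> t \<in> {0..T} \<Longrightarrow> norm (D i t) \<le> K"
    and D0: "\<And>t. t \<in> {0..T} \<Longrightarrow> norm (D 0 t) \<le> sqrt (real CARD('n))"
    and t\<^sub>n: "0 \<le> t\<^sub>n" "t\<^sub>n + \<tau> \<le> T"
    and Vn: "\<And>y. norm (Vn y) \<le> sqrt (real CARD('n))"
    and e: "\<And>k. k \<le> r \<Longrightarrow>
      norm (Wn unif_nodes \<epsilon> \<kappa> \<tau> Vn r (unif_nodes r k * \<tau>) x - D 0 (t\<^sub>n + unif_nodes r k * \<tau>)) \<le> e k"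
  shows "norm (Pn unif_nodes \<epsilon> \<kappa> \<tau> Vn r s x)
    \<le> \<kappa> * sqrt (real CARD('n)) + (2 * \<kappa> * real r ^ r * (\<Sum>k=0..r. e k) + interp_error_const \<kappa> r K * \<tau> ^ (r + 1))"
proof -
  let ?m = "real CARD('n)" and ?L = "lagr unif_nodes r \<tau>" and ?nd = "\<lambda>k. unif_nodes r k * \<tau>"
  define Q where "Q = (\<Sum>k=0..r. ?L k s *\<^sub>R Nop \<kappa> (D 0 (t\<^sub>n + ?nd k)))"
  have "?m \<ge> 1"
    by (simp add: Suc_le_eq)
  then have \<kappa>': "2 \<le> \<kappa>" "?m \<le> 2 * \<kappa>" "\<kappa> \<ge> -1"
    using \<kappa> by (linarith+)
  have nd: "?nd k \<in> {0..\<tau>}" if "k \<le> r" for k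
    using that \<tau> r by (auto simp: unif_nodes_def field_simps)
  then have t\<^sub>n_nd: "t\<^sub>n + ?nd k \<in> {0..T}" if "k \<le> r" for k
    using that t\<^sub>n by fastforce
  have "norm (Pn unif_nodes \<epsilon> \<kappa> \<tau> Vn r s x - Q)
      \<le> 2 * \<kappa> * real r ^ r * (\<Sum>k=0..r. norm (Wn unif_nodes \<epsilon> \<kappa> \<tau> Vn r (?nd k) x - D 0 (t\<^sub>n + ?nd k)))"
    unfolding Pn_eq_lagr_sum[where a = unif_nodes, OF unif_nodes_0] Q_def
    using nd t\<^sub>n_nd by (intro norm_lagr_sum_Nop_diff_le[OF \<tau> r s \<kappa>] norm_Wn_le[OF \<epsilon> \<kappa>'(1,2) Vn] D0)
  also have "\<dots> \<le> 2 * \<kappa> * real r ^ r * (\<Sum>k=0..r. e k)"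
    using \<kappa>' by (intro mult_left_mono sum_mono e) auto
  finally have "norm (Pn unif_nodes \<epsilon> \<kappa> \<tau> Vn r s x - Q) \<le> 2 * \<kappa> * real r ^ r * (\<Sum>k=0..r. e k)" .
  moreover have "norm (Q - Nop \<kappa> (D 0 (t\<^sub>n + s))) \<le> interp_error_const \<kappa> r K * \<tau> ^ (r + 1)"
    unfolding Q_def by (rule norm_lagr_sum_Nop_curve_sub_le[where D = D, OF \<tau> r s \<kappa>'(3) D bound t\<^sub>n])
  moreover have "norm (Nop \<kappa> (D 0 (t\<^sub>n + s))) \<le> \<kappa> * sqrt ?m"
    using s t\<^sub>n by (intro Nop_norm_le[OF D0 \<kappa>'(1,2)]) auto
  ultimately show ?thesis
    using norm_triangle_ineq[of "Pn unif_nodes \<epsilon> \<kappa> \<tau> Vn r s x - Q" "Q - Nop \<kappa> (D 0 (t\<^sub>n + s))"]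
      norm_triangle_ineq[of "Pn unif_nodes \<epsilon> \<kappa> \<tau> Vn r s x - Nop \<kappa> (D 0 (t\<^sub>n + s))" "Nop \<kappa> (D 0 (t\<^sub>n + s))"]
    by simp
qed

lemma norm_le_supnorm:
  assumes "bdd_above (range (\<lambda>x. norm (g x)))"
  shows "norm (g x) \<le> supnorm g"
  unfolding supnorm_def using assms by (rule cSUP_upper[OF UNIV_I])

lemma supnorm_le:
  assumes "\<And>x. norm (g x) \<le> B"
  shows "supnorm g \<le> B"
  unfolding supnorm_def using assms by (intro cSUP_least) auto

lemma continuous_on_Pn: "continuous_on S (\<lambda>s. Pn a \<epsilon> \<kappa> \<tau> Vn j s x)"
  unfolding Pn_def by (rule continuous_on_Pint)

lemma alphan_eq_1:
  fixes Vn :: "real^'d \<Rightarrow> real^'n^'m"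
  assumes "\<tau> \<ge> 0" and "(SUP s\<in>{0..\<tau>}. norm (Pn a \<epsilon> \<kappa> \<tau> Vn j s x)) \<le> \<kappa> * sqrt (real CARD('n))"
  shows "alphan a \<epsilon> \<kappa> \<tau> Vn j x = 1"
  unfolding alphan_def by (rule alpha_eq_1[where P = "Pn a \<epsilon> \<kappa> \<tau> Vn j", OF assms(1) continuous_on_Pn assms(2)])

lemma Ptn_eq_Pn:
  fixes Vn :: "real^'d \<Rightarrow> real^'n^'m"
  assumes "\<tau> \<ge> 0" and "(SUP s\<in>{0..\<tau>}. norm (Pn a \<epsilon> \<kappa> \<tau> Vn j s x)) \<le> \<kappa> * sqrt (real CARD('n))"
  shows "Ptn a \<epsilon> \<kappa> \<tau> Vn j s x = Pn a \<epsilon> \<kappa> \<tau> Vn j s x"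
  by (simp add: Ptn_def alphan_eq_1[OF assms])

lemma interp_error_const_nonneg: "\<kappa> \<ge> -1 \<Longrightarrow> K \<ge> 0 \<Longrightarrow> interp_error_const \<kappa> r K \<ge> 0"
  by (simp add: interp_error_const_def)

lemma norm_Pn_sub_Ptn_unif_nodes_le:
  fixes D :: "nat \<Rightarrow> real \<Rightarrow> real^'n^'m" and Vn :: "real^'d \<Rightarrow> real^'n^'m"
  assumes \<epsilon>: "\<epsilon> > 0" and \<tau>: "\<tau> > 0" and r: "r \<ge> 1" and s: "s \<in> {0..\<tau>}"
    and \<kappa>: "3 * real CARD('n) + 1 \<le> \<kappa>"
    and D: "\<And>i t. i < Suc r \<Longrightarrow> t \<in> {0..T} \<Longrightarrow> (D i has_vector_derivative D (Suc i) t) (at t within {0..T})"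
    and bound: "\<And>i t. i \<le> Suc r \<Longrightarrow> t \<in> {0..T} \<Longrightarrow> norm (D i t) \<le> K"
    and D0: "\<And>t. t \<in> {0..T} \<Longrightarrow> norm (D 0 t) \<le> sqrt (real CARD('n))"
    and t\<^sub>n: "0 \<le> t\<^sub>n" "t\<^sub>n + \<tau> \<le> T"
    and Vn: "\<And>y. norm (Vn y) \<le> sqrt (real CARD('n))"
    and e: "\<And>k. k \<le> r \<Longrightarrow>
      norm (Wn unif_nodes \<epsilon> \<kappa> \<tau> Vn r (unif_nodes r k * \<tau>) x - D 0 (t\<^sub>n + unif_nodes r k * \<tau>)) \<le> e k"
  shows "norm (Pn unif_nodes \<epsilon> \<kappa> \<tau> Vn r s x - Ptn unif_nodes \<epsilon> \<kappa> \<tau> Vn r s x)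
    \<le> 2 * \<kappa> * real r ^ r * (\<Sum>k=0..r. e k) + interp_error_const \<kappa> r K * \<tau> ^ (r + 1)"
    (is "_ \<le> ?bound")
proof -
  have "\<kappa> \<ge> 0"
    using \<kappa> of_nat_0_le_iff[of "CARD('n)"] by linarith
  have "t\<^sub>n \<in> {0..T}"
    using t\<^sub>n \<tau> by simp
  then have "K \<ge> 0"
    using bound order_trans[OF norm_ge_zero] by blast
  then have "?bound \<ge> 0"
    using \<open>\<kappa> \<ge> 0\<close> \<tau> e by (intro add_nonneg_nonneg mult_nonneg_nonneg sum_nonneg interp_error_const_nonneg)
      (auto intro: order_trans[OF norm_ge_zero])
  have "(SUP s\<in>{0..\<tau>}. norm (Pn unif_nodes \<epsilon> \<kappa> \<tau> Vn r s x)) \<le> \<kappa> * sqrt (real CARD('n)) + ?bound"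
    using \<tau> norm_Pn_unif_nodes_le[where D = D, OF \<epsilon> \<tau> r _ \<kappa> D bound D0 t\<^sub>n Vn e]
    by (intro cSUP_least) (auto simp: add.assoc)
  then show ?thesis
    unfolding Ptn_def alphan_def Pn_def[symmetric]
    using \<open>\<kappa> \<ge> 0\<close> continuous_on_Pn s \<open>?bound \<ge> 0\<close> by (intro norm_sub_alpha_scaleR_le)
qed

lemma norm_Wn_sub_le_supnorm:
  fixes Vn :: "real^'d \<Rightarrow> real^'n^'m" and u :: "(real^'d) \<Rightarrow>\<^sub>C (real^'n^'m)"
  assumes \<epsilon>: "\<epsilon> > 0" and \<kappa>: "2 \<le> \<kappa>" "real CARD('n) \<le> 2 * \<kappa>"
    and Vn: "\<And>y. norm (Vn y) \<le> sqrt (real CARD('n))" and \<sigma>: "\<sigma> \<in> {0..\<tau>}"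
    and u: "norm u \<le> sqrt (real CARD('n))"
  shows "norm (Wn a \<epsilon> \<kappa> \<tau> Vn j \<sigma> x - apply_bcontfun u x) \<le> supnorm (\<lambda>x. Wn a \<epsilon> \<kappa> \<tau> Vn j \<sigma> x - apply_bcontfun u x)"
proof (rule norm_le_supnorm, rule bdd_aboveI2)
  fix y
  have "norm (Wn a \<epsilon> \<kappa> \<tau> Vn j \<sigma> y) \<le> sqrt (real CARD('n))"
    by (rule norm_Wn_le[OF \<epsilon> \<kappa> Vn \<sigma>])
  moreover have "norm (apply_bcontfun u y) \<le> sqrt (real CARD('n))"
    using u norm_bounded order_trans by blast
  ultimately show "norm (Wn a \<epsilon> \<kappa> \<tau> Vn j \<sigma> y - apply_bcontfun u y) \<le> 2 * sqrt (real CARD('n))"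
    using norm_triangle_ineq4[of "Wn a \<epsilon> \<kappa> \<tau> Vn j \<sigma> y" "apply_bcontfun u y"] by linarith
qed

lemma supnorm_Pn_sub_Ptn_le:
  fixes U :: "real \<Rightarrow> ((real^'d) \<Rightarrow>\<^sub>C (real^'n^'m))" and Vn :: "real^'d \<Rightarrow> real^'n^'m"
  assumes \<epsilon>: "\<epsilon> > 0" and \<tau>: "\<tau> > 0" and r: "r \<ge> 1" and s: "s \<in> {0..\<tau>}"
    and \<kappa>: "3 * real CARD('n) + 1 \<le> \<kappa>"
    and U: "Ck_derivs (r + 1) T U Ds" and U_bound: "\<And>t. t \<in> {0..T} \<Longrightarrow> norm (U t) \<le> sqrt (real CARD('n))"
    and t\<^sub>n: "0 \<le> t\<^sub>n" "t\<^sub>n + \<tau> \<le> T"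
    and Vn: "\<And>y. norm (Vn y) \<le> sqrt (real CARD('n))"
  shows "supnorm (\<lambda>x. Pn unif_nodes \<epsilon> \<kappa> \<tau> Vn r s x - Ptn unif_nodes \<epsilon> \<kappa> \<tau> Vn r s x)
    \<le> 2 * \<kappa> * real r ^ r *
        (\<Sum>k=0..r. supnorm (\<lambda>x. Wn unif_nodes \<epsilon> \<kappa> \<tau> Vn r (real k * \<tau> / real r) x
                               - apply_bcontfun (U (t\<^sub>n + real k * \<tau> / real r)) x))
      + interp_error_const \<kappa> r (Ck_norm (r + 1) T Ds) * \<tau> ^ (r + 1)"
proof (rule supnorm_le)
  fix x
  let ?m = "real CARD('n)"
  define D where "D i t = apply_bcontfun (Ds i t) x" for i t
  have "?m \<ge> 1"
    by (simp add: Suc_le_eq)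
  then have \<kappa>': "2 \<le> \<kappa>" "?m \<le> 2 * \<kappa>"
    using \<kappa> by (linarith+)
  show "norm (Pn unif_nodes \<epsilon> \<kappa> \<tau> Vn r s x - Ptn unif_nodes \<epsilon> \<kappa> \<tau> Vn r s x)
    \<le> 2 * \<kappa> * real r ^ r *
        (\<Sum>k=0..r. supnorm (\<lambda>x. Wn unif_nodes \<epsilon> \<kappa> \<tau> Vn r (real k * \<tau> / real r) x
                               - apply_bcontfun (U (t\<^sub>n + real k * \<tau> / real r)) x))
      + interp_error_const \<kappa> r (Ck_norm (r + 1) T Ds) * \<tau> ^ (r + 1)"
  proof (rule norm_Pn_sub_Ptn_unif_nodes_le[where D = D, OF \<epsilon> \<tau> r s \<kappa> _ _ _ t\<^sub>n Vn])
    show "(D i has_vector_derivative D (Suc i) t) (at t within {0..T})" if "i < Suc r" "t \<in> {0..T}" for i t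
      unfolding D_def using U that by (intro Ck_derivs_apply_has_vector_derivative) auto
    show "norm (D i t) \<le> Ck_norm (r + 1) T Ds" if "i \<le> Suc r" "t \<in> {0..T}" for i t
      unfolding D_def using norm_Ck_derivs_le[OF U, of i t] that norm_bounded order_trans by fastforce
    show D0: "norm (D 0 t) \<le> sqrt ?m" if "t \<in> {0..T}" for t
      using U U_bound[OF that] that norm_bounded order_trans by (fastforce simp: D_def Ck_derivs_def)
    show "norm (Wn unif_nodes \<epsilon> \<kappa> \<tau> Vn r (unif_nodes r k * \<tau>) x - D 0 (t\<^sub>n + unif_nodes r k * \<tau>))
        \<le> supnorm (\<lambda>x. Wn unif_nodes \<epsilon> \<kappa> \<tau> Vn r (real k * \<tau> / real r) x
                     - apply_bcontfun (U (t\<^sub>n + real k * \<tau> / real r)) x)" if "k \<le> r" for k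
    proof -
      have "real k * \<tau> / real r \<in> {0..\<tau>}"
        using that \<tau> r by (auto simp: field_simps)
      moreover have "t\<^sub>n + real k * \<tau> / real r \<in> {0..T}"
        using calculation t\<^sub>n by auto
      ultimately show ?thesis
        using U by (simp add: D_def Ck_derivs_def unif_nodes_def norm_Wn_sub_le_supnorm[OF \<epsilon> \<kappa>' Vn] U_bound)
    qed
  qed
qed

theorem lemma3p6:
  fixes \<kappa> :: real and r :: nat
  assumes dim: "CARD('d::finite) \<in> {1, 2, 3}"
    and msize: "CARD('m2::finite) \<le> CARD('m1::finite)"
    and r: "r \<ge> 1"
    and kappa: "\<kappa> \<ge> 3 * real CARD('m2) + 1"
  shows
    "(\<forall>(\<epsilon>::real) (L::real^'d) (\<tau>::real) (Vn :: real^'d \<Rightarrow> real^'m2^'m1) (x::real^'d).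
        \<epsilon> > 0 \<and> (\<forall>i. L$i > 0) \<and> \<tau> > 0 \<and>
        continuous_on UNIV Vn \<and> periodic_box L Vn \<and> (\<forall>y. norm (Vn y) \<le> sqrt (real CARD('m2))) \<and>
        (SUP s\<in>{0..\<tau>}. norm (Pn unif_nodes \<epsilon> \<kappa> \<tau> Vn r s x)) \<le> \<kappa> * sqrt (real CARD('m2))
        \<longrightarrow> alphan unif_nodes \<epsilon> \<kappa> \<tau> Vn r x = 1 \<and>
            (\<forall>s. Ptn unif_nodes \<epsilon> \<kappa> \<tau> Vn r s x = Pn unif_nodes \<epsilon> \<kappa> \<tau> Vn r s x))
     \<and>
     (\<exists>C :: real \<Rightarrow> real.
      \<forall>(\<epsilon>::real) (L::real^'d) (T::real) (U :: real \<Rightarrow> ((real^'d) \<Rightarrow>\<^sub>C (real^'m2^'m1)))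
        (Ds :: nat \<Rightarrow> real \<Rightarrow> ((real^'d) \<Rightarrow>\<^sub>C (real^'m2^'m1))) (\<tau>::real) (tn::real)
        (Vn :: real^'d \<Rightarrow> real^'m2^'m1) (s::real).
        \<epsilon> > 0 \<and> (\<forall>i. L$i > 0) \<and> T > 0 \<and>
        Ck_derivs (r + 1) T U Ds \<and>
        exact_solution \<epsilon> L T U \<and>
        (\<forall>t\<in>{0..T}. norm (U t) \<le> sqrt (real CARD('m2))) \<and>
        \<tau> > 0 \<and> tn \<ge> 0 \<and> tn + \<tau> \<le> T \<and>
        continuous_on UNIV Vn \<and> periodic_box L Vn \<and> (\<forall>y. norm (Vn y) \<le> sqrt (real CARD('m2))) \<and>
        s \<in> {0..\<tau>}
        \<longrightarrow>
        supnorm (\<lambda>x. Pn unif_nodes \<epsilon> \<kappa> \<tau> Vn r s x - Ptn unif_nodes \<epsilon> \<kappa> \<tau> Vn r s x)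
          \<le> 2 * \<kappa> * real r ^ r *
             (\<Sum>k=0..r. supnorm (\<lambda>x. Wn unif_nodes \<epsilon> \<kappa> \<tau> Vn r (real k * \<tau> / real r) x
                                    - apply_bcontfun (U (tn + real k * \<tau> / real r)) x))
            + C (Ck_norm (r + 1) T Ds) * \<tau> ^ (r + 1))"
  by (intro conjI allI impI exI[of _ "interp_error_const \<kappa> r"]; elim conjE)
    (blast intro: alphan_eq_1 Ptn_eq_Pn supnorm_Pn_sub_Ptn_le[OF _ _ r _ kappa] less_imp_le)+

end
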